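(* Let $\{X_t\}_{t\ge 0}$ be an irreducible, positive recurrent discrete-time Markov chain on a countable state space $\mathbb{E}$ with transition matrix $P$ and invariant distribution $\boldsymbol{\pi}$, and let $\boldsymbol{g}$ be a real vector on $\mathbb{E}$ with $\boldsymbol{\pi}|\boldsymbol{g}|<\infty$. Partition $\mathbb{E}=A\cup B$ into two disjoint proper non-empty subsets, and partition accordingly $$P=\begin{bmatrix}P_A & P_{AB}\\ P_{BA} & P_B\end{bmatrix},\qquad \boldsymbol{h}=\begin{bmatrix}\boldsymbol{h}_A\\ \boldsymbol{h}_B\end{bmatrix}.$$ Let $N_B=\sum_{n=0}^\infty P_B^n$. Let $T(A)=\inf\{t\ge 1: X_t\in A\}$ and for $i\in\mathbb{E}$ let $y_i(A)={\rm E}[\sum_{0\le t<T(A)} g_{X_t}\mid X_0=i]$ and $\tau_i(A)={\rm E}[T(A)\mid X_0=i]$, with $\boldsymbol{y}_A(A),\boldsymbol{y}_B(A),\boldsymbol{\tau}_A(A),\boldsymbol{\tau}_B(A)$ the restrictions of these vectors to $A$ and $B$. Then the vector $\boldsymbol{h}$ given by $$\boldsymbol{h}_A=\boldsymbol{y}_A(A)-(\boldsymbol{\pi}\boldsymbol{g})\,\boldsymbol{\tau}_A(A)+(P_A+P_{AB}N_BP_{BA})\,\boldsymbol{h}_A$$ and $$\boldsymbol{h}_B=\boldsymbol{y}_B(A)-(\boldsymbol{\pi}\boldsymbol{g})\,\boldsymbol{\tau}_B(A)+N_BP_{BA}\,\boldsymbol{h}_A$$ is a solution of Poisson's equation $(I-P)\boldsymbol{h}=\boldsymbol{g}-\omega\boldsymbol{1}$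 with $\omega=\boldsymbol{\pi}\boldsymbol{g}$.
   Context: $\boldsymbol{1}$ denotes the all-ones column vector and $|\boldsymbol{g}|$ the componentwise absolute value of $\boldsymbol{g}$. *)

theory Defs
  imports "HOL-Probability.Probability"
begin

text \<open>Countable state space = the countable type 'a; matrices are functions 'a => 'a => real,
  matrix products are (unconditional) infinite sums.\<close>

fun mpow :: "('a \<Rightarrow> 'a \<Rightarrow> real) \<Rightarrow> nat \<Rightarrow> 'a \<Rightarrow> 'a \<Rightarrow> real" where
  "mpow P 0 = (\<lambda>i j. if i = j then 1 else 0)"
| "mpow P (Suc n) = (\<lambda>i j. \<Sum>\<^sub>\<infinity>k. mpow P n i k * P k j)"

definition stochastic_matrix :: "('a \<Rightarrow> 'a \<Rightarrow> real) \<Rightarrow> bool" where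
  "stochastic_matrix P \<longleftrightarrow> (\<forall>i j. 0 \<le> P i j) \<and> (\<forall>i. (P i has_sum 1) UNIV)"

definition irreducible_matrix :: "('a \<Rightarrow> 'a \<Rightarrow> real) \<Rightarrow> bool" where
  "irreducible_matrix P \<longleftrightarrow> (\<forall>i j. \<exists>n. mpow P n i j > 0)"

definition invariant_distribution :: "('a \<Rightarrow> 'a \<Rightarrow> real) \<Rightarrow> ('a \<Rightarrow> real) \<Rightarrow> bool" where
  "invariant_distribution P \<pi> \<longleftrightarrow> (\<forall>j. 0 \<le> \<pi> j) \<and> (\<pi> has_sum 1) UNIV \<and>
     (\<forall>j. (\<Sum>\<^sub>\<infinity>i. \<pi> i * P i j) = \<pi> j)"

text \<open>M i together with X is a realisation of the Markov chain with transition matrix P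
  started in state i (so expectations under M i are E[ . | X_0 = i]).\<close>
definition markov_chain_from ::
  "('a \<Rightarrow> 'a \<Rightarrow> real) \<Rightarrow> 'w measure \<Rightarrow> (nat \<Rightarrow> 'w \<Rightarrow> 'a) \<Rightarrow> 'a \<Rightarrow> bool" where
  "markov_chain_from P M X i \<longleftrightarrow> prob_space M \<and>
     (\<forall>t. X t \<in> measurable M (count_space UNIV)) \<and>
     (\<forall>n s. measure M {\<omega> \<in> space M. \<forall>t\<le>n. X t \<omega> = s t} =
            (if s 0 = i then (\<Prod>t<n. P (s t) (s (Suc t))) else 0))"

definition hit_time :: "'a set \<Rightarrow> (nat \<Rightarrow> 'w \<Rightarrow> 'a) \<Rightarrow> 'w \<Rightarrow> nat" where
  "hit_time A X \<omega> = (LEAST t. 1 \<le> t \<and> X t \<omega> \<in> A)"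

definition positive_recurrent ::
  "('a \<Rightarrow> 'w measure) \<Rightarrow> (nat \<Rightarrow> 'w \<Rightarrow> 'a) \<Rightarrow> bool" where
  "positive_recurrent M X \<longleftrightarrow> (\<forall>i.
     (AE \<omega> in M i. \<exists>t\<ge>1. X t \<omega> = i) \<and>
     integrable (M i) (\<lambda>\<omega>. real (hit_time {i} X \<omega>)))"

definition y_vec ::
  "('a \<Rightarrow> 'w measure) \<Rightarrow> (nat \<Rightarrow> 'w \<Rightarrow> 'a) \<Rightarrow> ('a \<Rightarrow> real) \<Rightarrow> 'a set \<Rightarrow> 'a \<Rightarrow> real" where
  "y_vec M X g A i = integral\<^sup>L (M i) (\<lambda>\<omega>. \<Sum>t<hit_time A X \<omega>. g (X t \<omega>))"

definition tau_vec ::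
  "('a \<Rightarrow> 'w measure) \<Rightarrow> (nat \<Rightarrow> 'w \<Rightarrow> 'a) \<Rightarrow> 'a set \<Rightarrow> 'a \<Rightarrow> real" where
  "tau_vec M X A i = integral\<^sup>L (M i) (\<lambda>\<omega>. real (hit_time A X \<omega>))"

text \<open>Restriction of P to B x B (the block P_B, padded with zeros) and
  N_B = sum_{n>=0} P_B^n (entries for i, j in B).\<close>
definition restr :: "('a \<Rightarrow> 'a \<Rightarrow> real) \<Rightarrow> 'a set \<Rightarrow> 'a \<Rightarrow> 'a \<Rightarrow> real" where
  "restr P B = (\<lambda>i j. if i \<in> B \<and> j \<in> B then P i j else 0)"

definition NB :: "('a \<Rightarrow> 'a \<Rightarrow> real) \<Rightarrow> 'a set \<Rightarrow> 'a \<Rightarrow> 'a \<Rightarrow> real" where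
  "NB P B i j = (\<Sum>n. mpow (restr P B) n i j)"

definition NBPBA :: "('a \<Rightarrow> 'a \<Rightarrow> real) \<Rightarrow> 'a set \<Rightarrow> 'a set \<Rightarrow> 'a \<Rightarrow> 'a \<Rightarrow> real" where
  "NBPBA P A B i k = (\<Sum>\<^sub>\<infinity>l\<in>B. NB P B i l * P l k)"

definition QA :: "('a \<Rightarrow> 'a \<Rightarrow> real) \<Rightarrow> 'a set \<Rightarrow> 'a set \<Rightarrow> 'a \<Rightarrow> 'a \<Rightarrow> real" where
  "QA P A B i k = P i k + (\<Sum>\<^sub>\<infinity>j\<in>B. P i j * NBPBA P A B j k)"

end

theory Submission
  imports Defs
begin

text \<open>
  Let \<open>u = y(A) - \<omega> \<tau>(A)\<close> and let \<open>E\<close> be the first-entrance kernel of \<open>A\<close> (entrance at a time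
  \<open>\<ge> 1\<close>), whose rows in \<open>A\<close> are \<open>P\<^sub>A + P\<^sub>A\<^sub>B N\<^sub>B P\<^sub>B\<^sub>A\<close> and whose rows in \<open>B\<close> are \<open>N\<^sub>B P\<^sub>B\<^sub>A\<close>.
  The hypotheses say \<open>h i = u i + (\<Sum>k\<in>A. E i k * h k)\<close> for all \<open>i\<close>. Conditioning on the first
  step gives \<open>u i = g i - \<omega> + (\<Sum>j\<in>B. P i j * u j)\<close> and \<open>E i k = P i k + (\<Sum>j\<in>B. P i j * E j k)\<close>;
  inserting the representation of \<open>h\<close> into \<open>\<Sum>j. P i j * h j\<close>, split over \<open>A\<close> and \<open>B\<close>, yields
  \<open>(\<Sum>j. P i j * h j) = h i - (g i - \<omega>)\<close>, for every constant \<open>\<omega>\<close>.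

  Everything is expressed through taboo probabilities (stay in \<open>B\<close>, then be at \<open>l\<close>), and the
  rearrangements of the resulting double series are justified by comparison with \<open>\<pi>\<close>: from
  \<open>k \<in> A\<close>, \<open>\<pi> k\<close> times the expected number of visits to \<open>l\<close> before re-entering \<open>A\<close> is at most
  \<open>\<pi> l\<close>. Irreducibility makes \<open>\<pi>\<close> positive and lets every state of \<open>B\<close> be reached from \<open>A\<close>
  before re-entering \<open>A\<close>, which transfers these bounds to all starting states.
\<close>

lemma has_sum_single_nonzero:
  fixes f :: "'b \<Rightarrow> 'c::topological_comm_monoid_add"
  assumes "x \<in> A" "\<And>y. y \<in> A \<Longrightarrow> y \<noteq> x \<Longrightarrow> f y = 0"
  shows "(f has_sum f x) A"
  by (rule has_sum_finite_neutralI[of "{x}"]) (use assms in auto)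

lemma has_sum_sum:
  fixes f :: "'t \<Rightarrow> 'b \<Rightarrow> 'c::topological_comm_monoid_add"
  assumes "finite I" "\<And>t. t \<in> I \<Longrightarrow> (f t has_sum s t) A"
  shows "((\<lambda>x. \<Sum>t\<in>I. f t x) has_sum (\<Sum>t\<in>I. s t)) A"
  using assms by (induction I rule: finite_induct) (auto intro: has_sum_add)

lemma has_sum_diff:
  fixes f g :: "'b \<Rightarrow> 'c::topological_ab_group_add"
  assumes "(f has_sum a) A" "(g has_sum b) A"
  shows "((\<lambda>x. f x - g x) has_sum (a - b)) A"
proof -
  have "((\<lambda>x. - g x) has_sum - b) A"
    using assms(2) by (simp add: has_sum_uminus)
  from has_sum_add[OF assms(1) this] show ?thesis by simp
qed

lemma term_le_has_sum:
  fixes f :: "'b \<Rightarrow> 'c::{topological_ab_group_add, ordered_comm_monoid_add, linorder_topology}"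
  assumes "(f has_sum S) A" "x \<in> A" "\<And>y. y \<in> A \<Longrightarrow> 0 \<le> f y"
  shows "f x \<le> S"
  using finite_sum_le_has_sum[OF assms(1), of "{x}"] assms by auto

lemma has_sum_Some_iff:
  fixes F :: "'b option \<Rightarrow> 'c::topological_comm_monoid_add"
  assumes "F None = 0"
  shows "(F has_sum S) UNIV \<longleftrightarrow> ((\<lambda>l. F (Some l)) has_sum S) UNIV"
proof -
  have "(F has_sum S) UNIV \<longleftrightarrow> (F has_sum S) (range Some)"
    by (rule has_sum_cong_neutral) (use assms in \<open>auto simp: notin_range_Some\<close>)
  also have "\<dots> \<longleftrightarrow> ((F \<circ> Some) has_sum S) UNIV"
    by (rule has_sum_reindex) simp
  finally show ?thesis by (simp add: o_def)
qed

lemma has_sum_swap_nonneg: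
  fixes F :: "'x \<Rightarrow> 'y \<Rightarrow> real"
  assumes nonneg: "\<And>x y. x \<in> A \<Longrightarrow> y \<in> B \<Longrightarrow> 0 \<le> F x y"
    and rows: "\<And>x. x \<in> A \<Longrightarrow> (F x has_sum G x) B" and total: "(G has_sum S) A"
  shows "\<And>y. y \<in> B \<Longrightarrow> (\<lambda>x. F x y) summable_on A"
    and "((\<lambda>y. \<Sum>\<^sub>\<infinity>x\<in>A. F x y) has_sum S) B"
proof -
  have "(\<lambda>(x,y). F x y) summable_on A \<times> B"
    by (rule summable_on_SigmaI[where g=G]) (use rows total nonneg in \<open>auto simp: summable_on_def\<close>)
  with rows total have "((\<lambda>(x,y). F x y) has_sum S) (A \<times> B)"
    by (intro has_sum_SigmaI[where g=G]) auto
  then have swapped: "((\<lambda>(y,x). F x y) has_sum S) (B \<times> A)"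
    using has_sum_swap[where f="\<lambda>(x,y). F x y" and A=A and B=B] by (simp add: case_prod_unfold)
  show columns: "\<And>y. y \<in> B \<Longrightarrow> (\<lambda>x. F x y) summable_on A"
    using summable_on_SigmaD1[of "\<lambda>y x. F x y" B "\<lambda>_. A"] swapped by (auto simp: summable_on_def)
  show "((\<lambda>y. \<Sum>\<^sub>\<infinity>x\<in>A. F x y) has_sum S) B"
    by (rule has_sum_SigmaD[OF swapped]) (use columns in auto)
qed

lemma has_sum_swap_abs:
  fixes F :: "'x \<Rightarrow> 'y \<Rightarrow> real"
  assumes rows: "\<And>x. x \<in> A \<Longrightarrow> (\<lambda>y. \<bar>F x y\<bar>) summable_on B"
    and total: "(\<lambda>x. \<Sum>\<^sub>\<infinity>y\<in>B. \<bar>F x y\<bar>) summable_on A"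
  shows "((\<lambda>y. \<Sum>\<^sub>\<infinity>x\<in>A. F x y) has_sum (\<Sum>\<^sub>\<infinity>x\<in>A. \<Sum>\<^sub>\<infinity>y\<in>B. F x y)) B"
proof -
  have "(\<lambda>(x,y). \<bar>F x y\<bar>) summable_on A \<times> B"
    by (rule summable_on_SigmaI[where g="\<lambda>x. \<Sum>\<^sub>\<infinity>y\<in>B. \<bar>F x y\<bar>"]) (use rows total in auto)
  then have "(\<lambda>z. norm ((\<lambda>(x,y). F x y) z)) summable_on A \<times> B"
    by (simp add: case_prod_unfold)
  then have sum: "(\<lambda>(x,y). F x y) summable_on A \<times> B"
    by (rule abs_summable_summable)
  have row_sums: "(\<lambda>y. (\<lambda>(x,y). F x y) (x, y)) summable_on B" if "x \<in> A" for x
    using rows[OF that] by (simp add: abs_summable_summable)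
  have outer: "(\<lambda>x. \<Sum>\<^sub>\<infinity>y\<in>B. F x y) summable_on A"
    using summable_on_SigmaD[OF sum row_sums] by simp
  have "((\<lambda>(x,y). F x y) has_sum (\<Sum>\<^sub>\<infinity>x\<in>A. \<Sum>\<^sub>\<infinity>y\<in>B. F x y)) (A \<times> B)"
    using row_sums by (intro has_sum_SigmaI[OF _ has_sum_infsum[OF outer] sum]) (simp add: has_sum_infsum)
  then have swapped: "((\<lambda>(y,x). F x y) has_sum (\<Sum>\<^sub>\<infinity>x\<in>A. \<Sum>\<^sub>\<infinity>y\<in>B. F x y)) (B \<times> A)"
    using has_sum_swap[where f="\<lambda>(x,y). F x y" and A=A and B=B] by (simp add: case_prod_unfold)
  have columns: "\<And>y. y \<in> B \<Longrightarrow> (\<lambda>x. F x y) summable_on A"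
    using summable_on_SigmaD1[of "\<lambda>y x. F x y" B "\<lambda>_. A"] swapped by (auto simp: summable_on_def)
  show ?thesis
    by (rule has_sum_SigmaD[OF swapped]) (use columns in auto)
qed

lemma has_sum_kernel_comp:
  fixes p :: "'j \<Rightarrow> real" and K :: "'j \<Rightarrow> 'l \<Rightarrow> real" and R f :: "'l \<Rightarrow> real"
  assumes p_nonneg: "\<And>j. j \<in> J \<Longrightarrow> 0 \<le> p j"
    and K_nonneg: "\<And>j l. j \<in> J \<Longrightarrow> l \<in> L \<Longrightarrow> 0 \<le> K j l"
    and mix: "\<And>l. l \<in> L \<Longrightarrow> ((\<lambda>j. p j * K j l) has_sum R l) J"
    and R_abs: "(\<lambda>l. R l * \<bar>f l\<bar>) summable_on L"
  shows "((\<lambda>j. p j * (\<Sum>\<^sub>\<infinity>l\<in>L. K j l * f l)) has_sum (\<Sum>\<^sub>\<infinity>l\<in>L. R l * f l)) J"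
proof -
  define F where "F l j = p j * K j l * f l" for l j
  have column_abs: "((\<lambda>j. \<bar>F l j\<bar>) has_sum R l * \<bar>f l\<bar>) J" if "l \<in> L" for l
    using has_sum_cmult_left[OF mix[OF that], of "\<bar>f l\<bar>"]
    by (rule has_sum_cong[THEN iffD1, rotated]) (simp add: F_def abs_mult p_nonneg K_nonneg that)
  have columns: "(\<lambda>j. \<bar>F l j\<bar>) summable_on J" if "l \<in> L" for l
    using column_abs[OF that] by (auto simp: summable_on_def)
  have "(\<lambda>l. R l * \<bar>f l\<bar>) summable_on L"
    by (rule R_abs)
  then have total: "(\<lambda>l. \<Sum>\<^sub>\<infinity>j\<in>J. \<bar>F l j\<bar>) summable_on L"
    by (rule summable_on_cong[THEN iffD1, rotated]) (simp add: infsumI[OF column_abs])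
  have "((\<lambda>j. \<Sum>\<^sub>\<infinity>l\<in>L. F l j) has_sum (\<Sum>\<^sub>\<infinity>l\<in>L. \<Sum>\<^sub>\<infinity>j\<in>J. F l j)) J"
    by (rule has_sum_swap_abs[OF columns total])
  moreover have "(\<Sum>\<^sub>\<infinity>l\<in>L. \<Sum>\<^sub>\<infinity>j\<in>J. F l j) = (\<Sum>\<^sub>\<infinity>l\<in>L. R l * f l)"
    by (rule infsum_cong) (simp add: F_def infsumI[OF has_sum_cmult_left[OF mix]])
  moreover have "(\<Sum>\<^sub>\<infinity>l\<in>L. F l j) = p j * (\<Sum>\<^sub>\<infinity>l\<in>L. K j l * f l)" for j
    unfolding F_def mult.assoc by (rule infsum_cmult_right')
  ultimately show ?thesis by simp
qed

lemma has_sum_of_nn_integral_count_space: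
  fixes f :: "'b \<Rightarrow> real"
  assumes nonneg: "\<And>x. x \<in> I \<Longrightarrow> 0 \<le> f x"
    and eq: "(\<integral>\<^sup>+x. ennreal (f x) \<partial>count_space I) = ennreal r" and "0 \<le> r"
  shows "(f has_sum r) I"
proof -
  have "integrable (count_space I) f"
    by (rule integrableI_nn_integral_finite[OF _ _ eq]) (auto simp: AE_count_space nonneg)
  then have abs: "Infinite_Set_Sum.abs_summable_on f I" by (simp add: abs_summable_on_def)
  have "infsetsum f I = r"
    unfolding infsetsum_def using nonneg eq \<open>0 \<le> r\<close>
    by (subst integral_eq_nn_integral) (auto simp: AE_count_space)
  moreover have "(\<lambda>x. norm (f x)) summable_on I"
    using abs abs_summable_equivalent by blast
  then have "f summable_on I"
    by (rule summable_on_cong[THEN iffD1, rotated]) (use nonneg in auto)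
  ultimately show ?thesis using infsetsum_infsum[OF abs] by (metis has_sum_infsum)
qed

lemma nn_integral_count_space_infsum:
  fixes f :: "'b \<Rightarrow> real"
  assumes nonneg: "\<And>x. x \<in> I \<Longrightarrow> 0 \<le> f x" and "f summable_on I"
  shows "(\<integral>\<^sup>+x. ennreal (f x) \<partial>count_space I) = ennreal (infsum f I)"
proof -
  have "(\<lambda>x. norm (f x)) summable_on I"
    using \<open>f summable_on I\<close> by (rule summable_on_cong[THEN iffD1, rotated]) (use nonneg in auto)
  then have abs: "Infinite_Set_Sum.abs_summable_on f I" using abs_summable_equivalent by blast
  show ?thesis using nn_integral_conv_infsetsum[OF abs] nonneg infsetsum_infsum[OF abs] by simp
qed

lemma (in finite_measure) measure_UN_has_sum:
  assumes "\<And>l. l \<in> I \<Longrightarrow> E l \<in> sets M" "countable I" "disjoint_family_on E I"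
  shows "((\<lambda>l. measure M (E l)) has_sum measure M (\<Union>l\<in>I. E l)) I"
proof (rule has_sum_of_nn_integral_count_space)
  have "emeasure M (\<Union>(E ` I)) = (\<integral>\<^sup>+i. emeasure M (E i) \<partial>count_space I)"
    by (rule emeasure_UN_countable[OF assms])
  then show "(\<integral>\<^sup>+l. ennreal (measure M (E l)) \<partial>count_space I) = ennreal (measure M (\<Union>l\<in>I. E l))"
    by (simp add: emeasure_eq_measure)
qed auto

lemma (in finite_measure) integral_countable_rv_nonneg:
  fixes Y :: "'a \<Rightarrow> 'b::countable" and \<phi> :: "'b \<Rightarrow> real"
  assumes Y[measurable]: "Y \<in> measurable M (count_space UNIV)"
    and nonneg: "\<And>l. 0 \<le> \<phi> l"
    and summable: "(\<lambda>l. \<phi> l * measure M {\<omega>\<in>space M. Y \<omega> = l}) summable_on UNIV"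
  shows "integrable M (\<lambda>\<omega>. \<phi> (Y \<omega>))"
    and "integral\<^sup>L M (\<lambda>\<omega>. \<phi> (Y \<omega>)) = (\<Sum>\<^sub>\<infinity>l. \<phi> l * measure M {\<omega>\<in>space M. Y \<omega> = l})"
proof -
  have meas: "(\<lambda>\<omega>. \<phi> (Y \<omega>)) \<in> borel_measurable M" by measurable
  have sets: "{\<omega>\<in>space M. Y \<omega> = l} \<in> sets M" for l by measurable
  have "(\<integral>\<^sup>+\<omega>. ennreal (\<phi> (Y \<omega>)) \<partial>M) =
     (\<integral>\<^sup>+\<omega>. \<integral>\<^sup>+l. ennreal (\<phi> l) * indicator {\<omega>\<in>space M. Y \<omega> = l} \<omega> \<partial>count_space UNIV \<partial>M)"
  proof (rule nn_integral_cong)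
    fix x assume x: "x \<in> space M"
    show "ennreal (\<phi> (Y x)) = (\<integral>\<^sup>+l. ennreal (\<phi> l) * indicator {\<omega>\<in>space M. Y \<omega> = l} x \<partial>count_space UNIV)"
      by (subst nn_integral_count_space'[where A="{Y x}"]) (use x in \<open>auto simp: indicator_def\<close>)
  qed
  also have "\<dots> = (\<integral>\<^sup>+l. \<integral>\<^sup>+\<omega>. ennreal (\<phi> l) * indicator {\<omega>\<in>space M. Y \<omega> = l} \<omega> \<partial>M \<partial>count_space UNIV)"
    by (rule nn_integral_count_space_nn_integral) auto
  also have "\<dots> = (\<integral>\<^sup>+l. ennreal (\<phi> l * measure M {\<omega>\<in>space M. Y \<omega> = l}) \<partial>count_space UNIV)"
    by (rule nn_integral_cong)
       (simp add: nn_integral_cmult_indicator[OF sets] emeasure_eq_measure ennreal_mult nonneg)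
  also have "\<dots> = ennreal (\<Sum>\<^sub>\<infinity>l. \<phi> l * measure M {\<omega>\<in>space M. Y \<omega> = l})"
    by (rule nn_integral_count_space_infsum) (auto simp: nonneg summable)
  finally have eq: "(\<integral>\<^sup>+\<omega>. ennreal (\<phi> (Y \<omega>)) \<partial>M) = ennreal (\<Sum>\<^sub>\<infinity>l. \<phi> l * measure M {\<omega>\<in>space M. Y \<omega> = l})" .
  show "integrable M (\<lambda>\<omega>. \<phi> (Y \<omega>))"
    by (rule integrableI_nn_integral_finite[OF meas _ eq]) (auto simp: nonneg)
  have "0 \<le> (\<Sum>\<^sub>\<infinity>l. \<phi> l * measure M {\<omega>\<in>space M. Y \<omega> = l})"
    by (rule infsum_nonneg) (simp add: nonneg)
  then show "integral\<^sup>L M (\<lambda>\<omega>. \<phi> (Y \<omega>)) = (\<Sum>\<^sub>\<infinity>l. \<phi> l * measure M {\<omega>\<in>space M. Y \<omega> = l})"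
    by (subst integral_eq_nn_integral[OF meas]) (auto simp: nonneg eq)
qed

lemma (in finite_measure) has_sum_integral_countable_rv:
  fixes Y :: "'a \<Rightarrow> 'b::countable" and \<phi> :: "'b \<Rightarrow> real"
  assumes Y[measurable]: "Y \<in> measurable M (count_space UNIV)"
    and summable: "(\<lambda>l. \<bar>\<phi> l\<bar> * measure M {\<omega>\<in>space M. Y \<omega> = l}) summable_on UNIV"
  shows "integrable M (\<lambda>\<omega>. \<phi> (Y \<omega>))"
    and "((\<lambda>l. \<phi> l * measure M {\<omega>\<in>space M. Y \<omega> = l}) has_sum integral\<^sup>L M (\<lambda>\<omega>. \<phi> (Y \<omega>))) UNIV"
proof -
  define \<phi>p where "\<phi>p l = max (\<phi> l) 0" for l
  define \<phi>n where "\<phi>n l = max (- \<phi> l) 0" for l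
  have split: "\<phi> l = \<phi>p l - \<phi>n l" for l by (simp add: \<phi>p_def \<phi>n_def)
  have sum_pos: "(\<lambda>l. \<phi>p l * measure M {\<omega>\<in>space M. Y \<omega> = l}) summable_on UNIV"
    by (rule summable_on_comparison_test[OF summable]) (auto simp: \<phi>p_def mult_right_mono)
  note pos = integral_countable_rv_nonneg[OF Y _ sum_pos]
  have sum_neg: "(\<lambda>l. \<phi>n l * measure M {\<omega>\<in>space M. Y \<omega> = l}) summable_on UNIV"
    by (rule summable_on_comparison_test[OF summable]) (auto simp: \<phi>n_def mult_right_mono)
  note neg = integral_countable_rv_nonneg[OF Y _ sum_neg]
  have int_pos: "integrable M (\<lambda>\<omega>. \<phi>p (Y \<omega>))" and int_neg: "integrable M (\<lambda>\<omega>. \<phi>n (Y \<omega>))"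
    using pos(1) neg(1) by (simp_all add: \<phi>p_def \<phi>n_def)
  show "integrable M (\<lambda>\<omega>. \<phi> (Y \<omega>))"
    unfolding split using int_pos int_neg by (rule Bochner_Integration.integrable_diff)
  have "integral\<^sup>L M (\<lambda>\<omega>. \<phi> (Y \<omega>)) = integral\<^sup>L M (\<lambda>\<omega>. \<phi>p (Y \<omega>)) - integral\<^sup>L M (\<lambda>\<omega>. \<phi>n (Y \<omega>))"
    unfolding split using int_pos int_neg by (rule Bochner_Integration.integral_diff)
  also have "\<dots> = (\<Sum>\<^sub>\<infinity>l. \<phi>p l * measure M {\<omega>\<in>space M. Y \<omega> = l}) - (\<Sum>\<^sub>\<infinity>l. \<phi>n l * measure M {\<omega>\<in>space M. Y \<omega> = l})"
    using pos neg by (auto simp: \<phi>p_def \<phi>n_def)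
  finally have "((\<lambda>l. \<phi>p l * measure M {\<omega>\<in>space M. Y \<omega> = l} - \<phi>n l * measure M {\<omega>\<in>space M. Y \<omega> = l})
      has_sum integral\<^sup>L M (\<lambda>\<omega>. \<phi> (Y \<omega>))) UNIV"
    by (simp only:) (intro has_sum_diff has_sum_infsum sum_pos sum_neg)
  then show "((\<lambda>l. \<phi> l * measure M {\<omega>\<in>space M. Y \<omega> = l}) has_sum integral\<^sup>L M (\<lambda>\<omega>. \<phi> (Y \<omega>))) UNIV"
    by (rule has_sum_cong[THEN iffD1, rotated]) (simp add: split left_diff_distrib)
qed

lemma bij_betw_snoc:
  "bij_betw (\<lambda>xs. xs @ [y]) {xs. length xs = Suc n \<and> (\<Phi> xs \<and> xs ! n = l)}
     {ys. length ys = Suc (Suc n) \<and> (\<Phi> (butlast ys) \<and> ys ! n = l \<and> last ys = y)}"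
  (is "bij_betw _ ?S ?S'")
proof (rule bij_betwI[where g=butlast])
  have snoc_butlast: "butlast ys @ [y] = ys" if "ys \<in> ?S'" for ys
    using that by (metis (mono_tags, lifting) append_butlast_last_id list.size(3) mem_Collect_eq nat.distinct(1))
  then show "butlast ys @ [y] = ys" if "ys \<in> ?S'" for ys
    using that .
  show "butlast \<in> ?S' \<rightarrow> ?S"
  proof
    fix ys assume ys: "ys \<in> ?S'"
    with snoc_butlast[OF ys] show "butlast ys \<in> ?S"
      by (auto simp: nth_append) (metis nth_append lessI length_butlast diff_Suc_1)
  qed
qed (auto simp: nth_append)

lemma mpow_nonneg:
  assumes "\<And>x y. 0 \<le> Q x y"
  shows "0 \<le> mpow Q n a b"
  using assms by (induction n arbitrary: b) (auto intro!: infsum_nonneg mult_nonneg_nonneg)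

locale markov_chain_family =
  fixes P :: "'a::countable \<Rightarrow> 'a \<Rightarrow> real" and M :: "'a \<Rightarrow> 'w measure" and X :: "nat \<Rightarrow> 'w \<Rightarrow> 'a"
  assumes stochastic: "stochastic_matrix P"
    and chain: "\<And>i. markov_chain_from P (M i) X i"
begin

lemma prob_space: "prob_space (M i)"
  using chain[of i] by (simp add: markov_chain_from_def)

lemma finite_measure: "finite_measure (M i)"
  using prob_space prob_space.finite_measure by blast

lemma measurable_X [measurable]: "X t \<in> measurable (M i) (count_space UNIV)"
  using chain[of i] by (simp add: markov_chain_from_def)

lemma measure_cylinder:
  "measure (M i) {\<omega> \<in> space (M i). \<forall>t\<le>n. X t \<omega> = s t} =
     (if s 0 = i then (\<Prod>t<n. P (s t) (s (Suc t))) else 0)"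
  using chain[of i] by (simp add: markov_chain_from_def)

lemma P_nonneg: "0 \<le> P a b"
  using stochastic by (simp add: stochastic_matrix_def)

lemma P_row_has_sum: "(P a has_sum 1) UNIV"
  using stochastic by (simp add: stochastic_matrix_def)

lemma mpow_P_pos_step:
  assumes "0 < mpow P (Suc n) a k"
  obtains j where "0 < mpow P n a j" "0 < P j k"
proof -
  have "\<exists>j. 0 < mpow P n a j \<and> 0 < P j k"
  proof (rule ccontr)
    assume "\<not> ?thesis"
    then have "mpow P n a j * P j k = 0" for j
      using mpow_nonneg[of P n a j, OF P_nonneg] P_nonneg[of j k] by (metis less_eq_real_def mult_eq_0_iff)
    then have "mpow P (Suc n) a k = 0" by (simp add: infsum_0)
    with assms show False by simp
  qed
  with that show ?thesis by blast
qed

subsection \<open>Markov property\<close>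

definition trajectory :: "nat \<Rightarrow> 'w \<Rightarrow> 'a list" where
  "trajectory n \<omega> = map (\<lambda>t. X t \<omega>) [0..<Suc n]"

lemma trajectory_nth: "t \<le> n \<Longrightarrow> trajectory n \<omega> ! t = X t \<omega>"
  by (simp add: trajectory_def nth_map del: upt_Suc)

lemma length_trajectory [simp]: "length (trajectory n \<omega>) = Suc n"
  by (simp add: trajectory_def del: upt_Suc)

lemma trajectory_Suc: "trajectory (Suc n) \<omega> = trajectory n \<omega> @ [X (Suc n) \<omega>]"
  by (simp add: trajectory_def)

lemma trajectory_eq_iff:
  "length xs = Suc n \<Longrightarrow> trajectory n \<omega> = xs \<longleftrightarrow> (\<forall>t\<le>n. X t \<omega> = xs ! t)"
  by (auto simp: list_eq_iff_nth_eq less_Suc_eq_le trajectory_nth)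

lemma measurable_trajectory [measurable]: "trajectory n \<in> measurable (M i) (count_space UNIV)"
proof (subst measurable_count_space_eq2_countable, safe)
  fix xs :: "'a list"
  have "trajectory n -` {xs} \<inter> space (M i) =
    (if length xs = Suc n then {\<omega>\<in>space (M i). \<forall>t\<in>{..n}. X t \<omega> = xs ! t} else {})"
    by (auto simp: trajectory_eq_iff trajectory_nth)
  also have "\<dots> \<in> sets (M i)"
  proof -
    have "{\<omega>\<in>space (M i). \<forall>t\<in>{..n}. X t \<omega> = xs ! t} \<in> sets (M i)" by measurable
    then show ?thesis by simp
  qed
  finally show "trajectory n -` {xs} \<inter> space (M i) \<in> sets (M i)" .
qed simp

definition path_weight :: "'a \<Rightarrow> 'a list \<Rightarrow> real" where
  "path_weight i xs = (if xs ! 0 = i then (\<Prod>t<length xs - 1. P (xs ! t) (xs ! Suc t)) else 0)"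

lemma path_weight_snoc:
  assumes "xs \<noteq> []"
  shows "path_weight i (xs @ [l]) = path_weight i xs * P (last xs) l"
proof -
  obtain m where m: "length xs = Suc m" using assms by (cases xs) auto
  have "(\<Prod>t<Suc m. P ((xs @ [l]) ! t) ((xs @ [l]) ! Suc t)) =
        (\<Prod>t<m. P (xs ! t) (xs ! Suc t)) * P (xs ! m) l"
    using m by (simp add: nth_append)
  moreover have "last xs = xs ! m" using m assms by (simp add: last_conv_nth)
  ultimately show ?thesis using m by (simp add: path_weight_def nth_append)
qed

lemma has_sum_path_weight:
  "(path_weight i has_sum measure (M i) {\<omega>\<in>space (M i). \<Phi> (trajectory n \<omega>)}) {xs. length xs = Suc n \<and> \<Phi> xs}"
proof -
  let ?I = "{xs. length xs = Suc n \<and> \<Phi> xs}"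
  have "((\<lambda>xs. measure (M i) {\<omega>\<in>space (M i). trajectory n \<omega> = xs}) has_sum
        measure (M i) (\<Union>xs\<in>?I. {\<omega>\<in>space (M i). trajectory n \<omega> = xs})) ?I"
    by (rule finite_measure.measure_UN_has_sum[OF finite_measure]) (auto simp: disjoint_family_on_def)
  moreover have "(\<Union>xs\<in>?I. {\<omega>\<in>space (M i). trajectory n \<omega> = xs}) = {\<omega>\<in>space (M i). \<Phi> (trajectory n \<omega>)}"
    by auto
  ultimately show ?thesis
    by (auto simp: trajectory_eq_iff measure_cylinder path_weight_def elim!: has_sum_cong[THEN iffD1, rotated])
qed

text \<open>Both sides are sums of path weights; appending the step \<open>l \<rightarrow> l'\<close> to a path ending in \<open>l\<close>
  multiplies its weight by \<open>P l l'\<close>.\<close>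

lemma measure_markov_step:
  "measure (M i) {\<omega>\<in>space (M i). \<Phi> (trajectory n \<omega>) \<and> X n \<omega> = l \<and> X (Suc n) \<omega> = l'} =
   measure (M i) {\<omega>\<in>space (M i). \<Phi> (trajectory n \<omega>) \<and> X n \<omega> = l} * P l l'"
proof -
  let ?S = "{xs. length xs = Suc n \<and> (\<Phi> xs \<and> xs ! n = l)}"
  let ?S' = "{ys. length ys = Suc (Suc n) \<and> (\<Phi> (butlast ys) \<and> ys ! n = l \<and> last ys = l')}"
  have long_event: "{\<omega>\<in>space (M i). \<Phi> (trajectory n \<omega>) \<and> X n \<omega> = l \<and> X (Suc n) \<omega> = l'} =
        {\<omega>\<in>space (M i). (\<lambda>ys. \<Phi> (butlast ys) \<and> ys ! n = l \<and> last ys = l') (trajectory (Suc n) \<omega>)}"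
    by (auto simp: trajectory_Suc nth_append trajectory_nth)
  have short_event: "{\<omega>\<in>space (M i). \<Phi> (trajectory n \<omega>) \<and> X n \<omega> = l} =
        {\<omega>\<in>space (M i). (\<lambda>xs. \<Phi> xs \<and> xs ! n = l) (trajectory n \<omega>)}"
    by (auto simp: trajectory_nth)
  have long: "(path_weight i has_sum measure (M i) {\<omega>\<in>space (M i). \<Phi> (trajectory n \<omega>) \<and> X n \<omega> = l \<and> X (Suc n) \<omega> = l'}) ?S'"
    unfolding long_event by (rule has_sum_path_weight)
  have short: "((\<lambda>xs. path_weight i xs * P l l') has_sum measure (M i) {\<omega>\<in>space (M i). \<Phi> (trajectory n \<omega>) \<and> X n \<omega> = l} * P l l') ?S"
    unfolding short_event by (rule has_sum_cmult_left, rule has_sum_path_weight)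
  have bij: "bij_betw (\<lambda>xs. xs @ [l']) ?S ?S'"
    by (rule bij_betw_snoc)
  have "((\<lambda>xs. path_weight i (xs @ [l'])) has_sum
      measure (M i) {\<omega>\<in>space (M i). \<Phi> (trajectory n \<omega>) \<and> X n \<omega> = l \<and> X (Suc n) \<omega> = l'}) ?S"
    using has_sum_reindex_bij_betw[OF bij] long by blast
  moreover have "path_weight i (xs @ [l']) = path_weight i xs * P l l'" if "xs \<in> ?S" for xs
  proof -
    from that have "xs \<noteq> []" by auto
    moreover from that this have "last xs = l" by (auto simp: last_conv_nth)
    ultimately show ?thesis by (simp add: path_weight_snoc)
  qed
  ultimately have "((\<lambda>xs. path_weight i xs * P l l') has_sum
      measure (M i) {\<omega>\<in>space (M i). \<Phi> (trajectory n \<omega>) \<and> X n \<omega> = l \<and> X (Suc n) \<omega> = l'}) ?S"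
    by (rule has_sum_cong[THEN iffD1, rotated -1]) auto
  from has_sum_unique[OF this short] show ?thesis .
qed

subsection \<open>Taboo probabilities\<close>

text \<open>\<open>taboo_prob B i n l\<close> is the probability, starting from \<open>i\<close>, of staying in \<open>B\<close> at times
  \<open>1, \<dots>, n\<close> and being at \<open>l\<close> at time \<open>n\<close>; for \<open>i \<in> B\<close> it is the entry \<open>(P\<^sub>B\<^sup>n)\<^sub>i\<^sub>l\<close>.\<close>

definition taboo_prob :: "'a set \<Rightarrow> 'a \<Rightarrow> nat \<Rightarrow> 'a \<Rightarrow> real" where
  "taboo_prob B i n l = measure (M i) {\<omega>\<in>space (M i). (\<forall>t\<in>{1..n}. X t \<omega> \<in> B) \<and> X n \<omega> = l}"

lemma taboo_prob_nonneg: "0 \<le> taboo_prob B i n l"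
  by (simp add: taboo_prob_def)

lemma taboo_prob_le_1: "taboo_prob B i n l \<le> 1"
  unfolding taboo_prob_def using prob_space by (simp add: prob_space.prob_le_1)

lemma taboo_prob_0: "taboo_prob B i 0 l = (if l = i then 1 else 0)"
proof -
  have "{\<omega>\<in>space (M i). (\<forall>t\<in>{1..0::nat}. X t \<omega> \<in> B) \<and> X 0 \<omega> = l} =
        {\<omega>\<in>space (M i). \<forall>t\<le>0. X t \<omega> = (\<lambda>_. l) t}"
    by auto
  moreover have "measure (M i) {\<omega>\<in>space (M i). \<forall>t\<le>0. X t \<omega> = (\<lambda>_. l) t} = (if l = i then 1 else 0)"
    by (subst measure_cylinder) simp
  ultimately show ?thesis by (simp add: taboo_prob_def)
qed

lemma taboo_prob_Suc_notin:
  assumes "l \<notin> B"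
  shows "taboo_prob B i (Suc n) l = 0"
proof -
  have "{\<omega>\<in>space (M i). (\<forall>t\<in>{1..Suc n}. X t \<omega> \<in> B) \<and> X (Suc n) \<omega> = l} = {}"
    using assms by auto
  then show ?thesis unfolding taboo_prob_def by (simp only: measure_empty)
qed

lemma has_sum_taboo_prob:
  "(taboo_prob B i n has_sum measure (M i) {\<omega>\<in>space (M i). \<forall>t\<in>{1..n}. X t \<omega> \<in> B}) UNIV"
proof -
  let ?E = "\<lambda>l. {\<omega>\<in>space (M i). (\<forall>t\<in>{1..n}. X t \<omega> \<in> B) \<and> X n \<omega> = l}"
  have "((\<lambda>l. measure (M i) (?E l)) has_sum measure (M i) (\<Union>l\<in>UNIV. ?E l)) UNIV"
    by (rule finite_measure.measure_UN_has_sum[OF finite_measure]) (auto simp: disjoint_family_on_def)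
  moreover have "(\<Union>l\<in>UNIV. ?E l) = {\<omega>\<in>space (M i). \<forall>t\<in>{1..n}. X t \<omega> \<in> B}" by auto
  ultimately show ?thesis by (simp add: taboo_prob_def[abs_def])
qed

lemma taboo_prob_Suc:
  assumes "l' \<in> B"
  shows "((\<lambda>l. taboo_prob B i n l * P l l') has_sum taboo_prob B i (Suc n) l') UNIV"
proof -
  define \<Phi> where "\<Phi> xs = (\<forall>t\<in>{1..n}. xs ! t \<in> B)" for xs
  let ?E = "\<lambda>l. {\<omega>\<in>space (M i). \<Phi> (trajectory n \<omega>) \<and> X n \<omega> = l \<and> X (Suc n) \<omega> = l'}"
  have stay: "{\<omega>\<in>space (M i). \<Phi> (trajectory n \<omega>) \<and> X n \<omega> = l} =
      {\<omega>\<in>space (M i). (\<forall>t\<in>{1..n}. X t \<omega> \<in> B) \<and> X n \<omega> = l}" for l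
    by (auto simp: \<Phi>_def trajectory_nth)
  have "((\<lambda>l. measure (M i) (?E l)) has_sum measure (M i) (\<Union>l\<in>UNIV. ?E l)) UNIV"
    by (rule finite_measure.measure_UN_has_sum[OF finite_measure]) (auto simp: disjoint_family_on_def)
  moreover have "(\<Union>l\<in>UNIV. ?E l) = {\<omega>\<in>space (M i). (\<forall>t\<in>{1..Suc n}. X t \<omega> \<in> B) \<and> X (Suc n) \<omega> = l'}"
    using assms by (auto simp: \<Phi>_def trajectory_nth le_Suc_eq)
  ultimately show ?thesis
    by (simp add: measure_markov_step stay taboo_prob_def)
qed

lemma taboo_prob_1: "taboo_prob B i (Suc 0) l = (if l \<in> B then P i l else 0)"
proof (cases "l \<in> B")
  case True
  have "((\<lambda>m. taboo_prob B i 0 m * P m l) has_sum taboo_prob B i 0 i * P i l) UNIV"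
    by (rule has_sum_single_nonzero) (auto simp: taboo_prob_0)
  with taboo_prob_Suc[OF True, of i 0] show ?thesis
    using True by (simp add: has_sum_unique taboo_prob_0)
qed (simp add: taboo_prob_Suc_notin)

lemma taboo_prob_first_step: "((\<lambda>j. P i j * taboo_prob B j n l) has_sum taboo_prob B i (Suc n) l) B"
proof (induction n arbitrary: l)
  case 0
  show ?case
  proof (cases "l \<in> B")
    case True
    then have "((\<lambda>j. P i j * taboo_prob B j 0 l) has_sum P i l * taboo_prob B l 0 l) B"
      by (intro has_sum_single_nonzero) (auto simp: taboo_prob_0)
    then show ?thesis using True by (simp add: taboo_prob_0 taboo_prob_1)
  next
    case False
    then have "((\<lambda>j. P i j * taboo_prob B j 0 l) has_sum 0) B"
      by (intro has_sum_0) (auto simp: taboo_prob_0)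
    then show ?thesis using False by (simp add: taboo_prob_1)
  qed
next
  case (Suc n)
  show ?case
  proof (cases "l \<in> B")
    case False
    then have "((\<lambda>j. P i j * taboo_prob B j (Suc n) l) has_sum 0) B"
      by (intro has_sum_0) (simp add: taboo_prob_Suc_notin)
    then show ?thesis using False by (simp add: taboo_prob_Suc_notin)
  next
    case True
    have "((\<lambda>j. \<Sum>\<^sub>\<infinity>m. P i j * taboo_prob B j n m * P m l) has_sum taboo_prob B i (Suc (Suc n)) l) B"
    proof (rule has_sum_swap_nonneg(2))
      show "((\<lambda>j. P i j * taboo_prob B j n m * P m l) has_sum taboo_prob B i (Suc n) m * P m l) B" for m
        using has_sum_cmult_left[OF Suc.IH[of m], of "P m l"] by (simp add: mult.assoc)
    qed (auto intro!: mult_nonneg_nonneg P_nonneg taboo_prob_nonneg taboo_prob_Suc True)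
    moreover have "(\<Sum>\<^sub>\<infinity>m. P i j * taboo_prob B j n m * P m l) = P i j * taboo_prob B j (Suc n) l" for j
      using infsumI[OF taboo_prob_Suc[OF True, of j n]] by (simp add: mult.assoc infsum_cmult_right')
    ultimately show ?thesis by simp
  qed
qed

lemma taboo_prob_mult_le: "taboo_prob B k m i * taboo_prob B i t l \<le> taboo_prob B k (m + t) l"
proof (induction t arbitrary: l)
  case 0
  then show ?case by (auto simp: taboo_prob_0 taboo_prob_nonneg taboo_prob_le_1)
next
  case (Suc t)
  show ?case
  proof (cases "l \<in> B")
    case False
    then show ?thesis by (simp add: taboo_prob_Suc_notin taboo_prob_nonneg)
  next
    case True
    have "((\<lambda>j. taboo_prob B k m i * (taboo_prob B i t j * P j l)) has_sum
        taboo_prob B k m i * taboo_prob B i (Suc t) l) UNIV"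
      by (rule has_sum_cmult_right, rule taboo_prob_Suc[OF True])
    moreover have "((\<lambda>j. taboo_prob B k (m + t) j * P j l) has_sum taboo_prob B k (Suc (m + t)) l) UNIV"
      by (rule taboo_prob_Suc[OF True])
    moreover have "taboo_prob B k m i * (taboo_prob B i t j * P j l) \<le> taboo_prob B k (m + t) j * P j l" for j
      using mult_right_mono[OF Suc.IH P_nonneg] by (simp add: mult.assoc)
    ultimately show ?thesis by (simp add: has_sum_mono)
  qed
qed

lemma mpow_restr_eq_taboo_prob: "j \<in> B \<Longrightarrow> mpow (restr P B) n j l = taboo_prob B j n l"
proof (induction n arbitrary: l)
  case 0
  then show ?case by (simp add: taboo_prob_0)
next
  case (Suc n)
  show ?case
  proof (cases "l \<in> B")
    case False
    then show ?thesis by (simp add: restr_def taboo_prob_Suc_notin)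
  next
    case True
    have "mpow (restr P B) (Suc n) j l = (\<Sum>\<^sub>\<infinity>m. taboo_prob B j n m * restr P B m l)"
      using Suc by simp
    also have "\<dots> = (\<Sum>\<^sub>\<infinity>m. taboo_prob B j n m * P m l)"
      using Suc.prems True
      by (intro infsum_cong) (cases n; auto simp: restr_def taboo_prob_0 taboo_prob_Suc_notin)
    also have "\<dots> = taboo_prob B j (Suc n) l"
      using taboo_prob_Suc[OF True] by (simp add: infsumI)
    finally show ?thesis .
  qed
qed

definition taboo_value :: "'a set \<Rightarrow> ('a \<Rightarrow> real) \<Rightarrow> nat \<Rightarrow> 'w \<Rightarrow> real" where
  "taboo_value B g t \<omega> = (if \<forall>s\<in>{1..t}. X s \<omega> \<in> B then g (X t \<omega>) else 0)"

lemma abs_taboo_value: "\<bar>taboo_value B g t \<omega>\<bar> = taboo_value B (\<lambda>l. \<bar>g l\<bar>) t \<omega>"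
  by (simp add: taboo_value_def)

lemma integral_taboo_value:
  assumes summable: "(\<lambda>l. \<bar>g l\<bar> * taboo_prob B i t l) summable_on UNIV"
  shows "integrable (M i) (taboo_value B g t)"
    and "integral\<^sup>L (M i) (taboo_value B g t) = (\<Sum>\<^sub>\<infinity>l. g l * taboo_prob B i t l)"
proof -
  define Y where "Y \<omega> = (if \<forall>s\<in>{1..t}. X s \<omega> \<in> B then Some (X t \<omega>) else None)" for \<omega>
  define \<phi> where "\<phi> = case_option 0 g"
  have Y[measurable]: "Y \<in> measurable (M i) (count_space UNIV)"
    unfolding Y_def by measurable
  have value_eq: "taboo_value B g t = (\<lambda>\<omega>. \<phi> (Y \<omega>))"
    by (simp add: taboo_value_def Y_def \<phi>_def fun_eq_iff)
  have measure_Y: "measure (M i) {\<omega>\<in>space (M i). Y \<omega> = Some l} = taboo_prob B i t l" for l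
    unfolding taboo_prob_def Y_def by (rule arg_cong[where f="measure (M i)"]) auto
  have "((\<lambda>l. \<bar>g l\<bar> * taboo_prob B i t l) has_sum (\<Sum>\<^sub>\<infinity>l. \<bar>g l\<bar> * taboo_prob B i t l)) UNIV"
    using summable by (rule has_sum_infsum)
  then have "((\<lambda>y. \<bar>\<phi> y\<bar> * measure (M i) {\<omega>\<in>space (M i). Y \<omega> = y}) has_sum
      (\<Sum>\<^sub>\<infinity>l. \<bar>g l\<bar> * taboo_prob B i t l)) UNIV"
    by (subst has_sum_Some_iff) (auto simp: \<phi>_def measure_Y)
  then have "(\<lambda>y. \<bar>\<phi> y\<bar> * measure (M i) {\<omega>\<in>space (M i). Y \<omega> = y}) summable_on UNIV"
    by (auto simp: summable_on_def)
  note rv = finite_measure.has_sum_integral_countable_rv[OF finite_measure Y this]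
  show "integrable (M i) (taboo_value B g t)"
    unfolding value_eq by (rule rv(1))
  have "((\<lambda>l. g l * taboo_prob B i t l) has_sum integral\<^sup>L (M i) (\<lambda>\<omega>. \<phi> (Y \<omega>))) UNIV"
    using rv(2) by (subst (asm) has_sum_Some_iff) (auto simp: \<phi>_def measure_Y)
  then show "integral\<^sup>L (M i) (taboo_value B g t) = (\<Sum>\<^sub>\<infinity>l. g l * taboo_prob B i t l)"
    unfolding value_eq by (simp add: infsumI)
qed

lemma stays_iff_less_hit_time:
  assumes "A \<inter> B = {}" "A \<union> B = UNIV" "\<exists>t\<ge>1. X t \<omega> \<in> A"
  shows "(\<forall>s\<in>{1..t}. X s \<omega> \<in> B) \<longleftrightarrow> t < hit_time A X \<omega>"
proof
  assume stay: "\<forall>s\<in>{1..t}. X s \<omega> \<in> B"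
  have "1 \<le> hit_time A X \<omega> \<and> X (hit_time A X \<omega>) \<omega> \<in> A"
    unfolding hit_time_def using assms(3) by (rule LeastI_ex)
  show "t < hit_time A X \<omega>"
  proof (rule ccontr)
    assume "\<not> t < hit_time A X \<omega>"
    with \<open>1 \<le> hit_time A X \<omega> \<and> _\<close> have "hit_time A X \<omega> \<in> {1..t}" by simp
    with stay have "X (hit_time A X \<omega>) \<omega> \<in> B" by (rule bspec)
    with \<open>1 \<le> hit_time A X \<omega> \<and> _\<close> assms(1) show False by blast
  qed
next
  assume less: "t < hit_time A X \<omega>"
  show "\<forall>s\<in>{1..t}. X s \<omega> \<in> B"
  proof (rule ballI, rule ccontr)
    fix s assume s: "s \<in> {1..t}" and "X s \<omega> \<notin> B"
    then have "1 \<le> s \<and> X s \<omega> \<in> A" using assms(2) by auto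
    then have "hit_time A X \<omega> \<le> s" unfolding hit_time_def by (rule Least_le)
    with less s show False by auto
  qed
qed

end

locale markov_chain_split = markov_chain_family P M X
  for P :: "'a::countable \<Rightarrow> 'a \<Rightarrow> real" and M :: "'a \<Rightarrow> 'w measure" and X +
  fixes A B :: "'a set" and \<pi> :: "'a \<Rightarrow> real"
  assumes partition: "A \<inter> B = {}" "A \<union> B = UNIV" "A \<noteq> {}"
    and invariant: "invariant_distribution P \<pi>" and irreducible: "irreducible_matrix P"
begin

lemma notin_A_iff: "j \<notin> A \<longleftrightarrow> j \<in> B"
  using partition by blast

lemma pi_nonneg: "0 \<le> \<pi> j"
  using invariant by (simp add: invariant_distribution_def)

lemma pi_has_sum: "(\<pi> has_sum 1) UNIV"
  using invariant by (simp add: invariant_distribution_def)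

lemma pi_invariant: "(\<Sum>\<^sub>\<infinity>i. \<pi> i * P i j) = \<pi> j"
  using invariant by (simp add: invariant_distribution_def)

text \<open>\<open>invariant_distribution\<close> only constrains the value of \<open>infsum\<close>, which is also defined for
  non-summable families; summability follows from the row sums of \<open>P\<close> and Tonelli.\<close>

lemma invariant_has_sum: "((\<lambda>i. \<pi> i * P i k) has_sum \<pi> k) UNIV"
proof -
  have "(\<lambda>i. \<pi> i * P i k) summable_on UNIV"
  proof (rule has_sum_swap_nonneg(1)[where G=\<pi>])
    show "((\<lambda>k. \<pi> i * P i k) has_sum \<pi> i) UNIV" for i
      using has_sum_cmult_right[OF P_row_has_sum[of i], of "\<pi> i"] by simp
  qed (auto intro: mult_nonneg_nonneg pi_nonneg P_nonneg pi_has_sum)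
  then show ?thesis
    using pi_invariant[of k] by (metis has_sum_infsum)
qed

text \<open>Irreducibility propagates positivity of \<open>\<pi>\<close> from one state to all states.\<close>

lemma pi_pos: "0 < \<pi> k"
proof -
  have "\<exists>m. 0 < \<pi> m"
  proof (rule ccontr)
    assume "\<nexists>m. 0 < \<pi> m"
    then have "\<pi> = (\<lambda>_. 0)" using pi_nonneg by (force simp: less_le)
    with pi_has_sum have "((\<lambda>_::'a. 0::real) has_sum 1) UNIV" by simp
    then show False by (metis has_sum_0_simp has_sum_unique zero_neq_one)
  qed
  then obtain m where m: "0 < \<pi> m" by blast
  have "\<forall>k. 0 < mpow P n m k \<longrightarrow> 0 < \<pi> k" for n
  proof (induction n)
    case 0
    then show ?case using m by auto
  next
    case (Suc n)
    show ?case
    proof (intro allI impI)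
      fix k assume "0 < mpow P (Suc n) m k"
      then obtain j where j: "0 < mpow P n m j" "0 < P j k" by (rule mpow_P_pos_step)
      with Suc have "0 < \<pi> j * P j k" by simp
      also have "\<dots> \<le> \<pi> k"
        by (rule term_le_has_sum[OF invariant_has_sum]) (auto intro: mult_nonneg_nonneg pi_nonneg P_nonneg)
      finally show "0 < \<pi> k" .
    qed
  qed
  moreover obtain n where "0 < mpow P n m k"
    using irreducible by (auto simp: irreducible_matrix_def)
  ultimately show ?thesis by blast
qed

text \<open>The classical bound on the expected number of visits to \<open>l\<close> between two visits to \<open>A\<close>,
  obtained by iterating the invariance equation.\<close>

lemma invariant_bounds_taboo_visits:
  assumes k: "k \<in> A" and l: "l \<in> B"
  shows "\<pi> k * (\<Sum>t<N. taboo_prob B k (Suc t) l) \<le> \<pi> l"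
  using l
proof (induction N arbitrary: l)
  case 0
  then show ?case by (simp add: pi_nonneg)
next
  case (Suc N)
  define c where "c j = \<pi> k * (taboo_prob B k 0 j + (\<Sum>t<N. taboo_prob B k (Suc t) j))" for j
  have "((\<lambda>j. taboo_prob B k 0 j * P j l) has_sum taboo_prob B k (Suc 0) l) UNIV"
    by (rule taboo_prob_Suc[OF Suc.prems])
  moreover have "((\<lambda>j. \<Sum>t<N. taboo_prob B k (Suc t) j * P j l) has_sum (\<Sum>t<N. taboo_prob B k (Suc (Suc t)) l)) UNIV"
    by (rule has_sum_sum) (auto intro: taboo_prob_Suc[OF Suc.prems])
  ultimately have "((\<lambda>j. \<pi> k * (taboo_prob B k 0 j * P j l + (\<Sum>t<N. taboo_prob B k (Suc t) j * P j l))) has_sum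
         \<pi> k * (taboo_prob B k (Suc 0) l + (\<Sum>t<N. taboo_prob B k (Suc (Suc t)) l))) UNIV"
    by (intro has_sum_cmult_right has_sum_add)
  then have c_step: "((\<lambda>j. c j * P j l) has_sum
      \<pi> k * (taboo_prob B k (Suc 0) l + (\<Sum>t<N. taboo_prob B k (Suc (Suc t)) l))) UNIV"
    by (simp add: c_def algebra_simps sum_distrib_left sum_distrib_right)
  have c_le: "c j \<le> \<pi> j" for j
  proof (cases "j \<in> B")
    case True
    then have "c j = \<pi> k * (\<Sum>t<N. taboo_prob B k (Suc t) j)"
      using k partition(1) by (auto simp: c_def taboo_prob_0)
    with Suc.IH[OF True] show ?thesis by simp
  next
    case False
    then show ?thesis by (auto simp: c_def taboo_prob_Suc_notin taboo_prob_0 pi_nonneg)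
  qed
  have "\<pi> k * (taboo_prob B k (Suc 0) l + (\<Sum>t<N. taboo_prob B k (Suc (Suc t)) l)) \<le> \<pi> l"
    by (rule has_sum_mono[OF c_step invariant_has_sum]) (simp add: c_le P_nonneg mult_right_mono)
  then show ?case unfolding sum.lessThan_Suc_shift .
qed

lemma invariant_bounds_taboo_prob:
  assumes "k \<in> A"
  shows "\<pi> k * taboo_prob B k (Suc t) l \<le> \<pi> l"
proof (cases "l \<in> B")
  case True
  have "\<pi> k * taboo_prob B k (Suc t) l \<le> \<pi> k * (\<Sum>s<Suc t. taboo_prob B k (Suc s) l)"
    by (intro mult_left_mono member_le_sum) (auto intro: taboo_prob_nonneg pi_nonneg)
  also have "\<dots> \<le> \<pi> l" by (rule invariant_bounds_taboo_visits[OF assms True])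
  finally show ?thesis .
qed (simp add: taboo_prob_Suc_notin pi_nonneg)

lemma summable_taboo_series_from_A:
  assumes k: "k \<in> A" and f_nonneg: "\<And>l. 0 \<le> f l" and f: "(\<lambda>l. \<pi> l * f l) summable_on UNIV"
  shows "(\<lambda>l. f l * taboo_prob B k n l) summable_on UNIV"
    and "summable (\<lambda>t. \<Sum>\<^sub>\<infinity>l. f l * taboo_prob B k t l)"
proof -
  have pos: "0 < \<pi> k" by (rule pi_pos)
  have dominant: "(\<lambda>l. \<pi> l * f l / \<pi> k) summable_on UNIV"
    using summable_on_cmult_left[OF f, of "1 / \<pi> k"] by simp
  have term_le: "f l * taboo_prob B k (Suc t) l \<le> \<pi> l * f l / \<pi> k" for t l
  proof -
    have "taboo_prob B k (Suc t) l \<le> \<pi> l / \<pi> k"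
      using invariant_bounds_taboo_prob[OF k, of t l] pos by (simp add: field_simps)
    from mult_left_mono[OF this f_nonneg[of l]] show ?thesis by (simp add: mult.commute)
  qed
  have summable_Suc: "(\<lambda>l. f l * taboo_prob B k (Suc t) l) summable_on UNIV" for t
    by (rule summable_on_comparison_test[OF dominant term_le]) (simp add: f_nonneg taboo_prob_nonneg)
  show "(\<lambda>l. f l * taboo_prob B k n l) summable_on UNIV"
  proof (cases n)
    case 0
    have "((\<lambda>l. f l * taboo_prob B k 0 l) has_sum f k * taboo_prob B k 0 k) UNIV"
      by (rule has_sum_single_nonzero) (auto simp: taboo_prob_0)
    with 0 show ?thesis by (auto simp: summable_on_def)
  qed (simp add: summable_Suc)
  have partial_le: "(\<Sum>t<N. \<Sum>\<^sub>\<infinity>l. f l * taboo_prob B k (Suc t) l) \<le> (\<Sum>\<^sub>\<infinity>l. \<pi> l * f l / \<pi> k)" for N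
  proof (rule has_sum_mono)
    show "((\<lambda>l. \<Sum>t<N. f l * taboo_prob B k (Suc t) l) has_sum (\<Sum>t<N. \<Sum>\<^sub>\<infinity>l. f l * taboo_prob B k (Suc t) l)) UNIV"
      by (rule has_sum_sum) (simp_all add: summable_Suc)
    show "((\<lambda>l. \<pi> l * f l / \<pi> k) has_sum (\<Sum>\<^sub>\<infinity>l. \<pi> l * f l / \<pi> k)) UNIV"
      using dominant by (rule has_sum_infsum)
    show "(\<Sum>t<N. f l * taboo_prob B k (Suc t) l) \<le> \<pi> l * f l / \<pi> k" for l
    proof (cases "l \<in> B")
      case True
      have "(\<Sum>t<N. taboo_prob B k (Suc t) l) \<le> \<pi> l / \<pi> k"
        using invariant_bounds_taboo_visits[OF k True, of N] pos by (simp add: field_simps)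
      from mult_left_mono[OF this f_nonneg[of l]] show ?thesis by (simp add: sum_distrib_left mult.commute)
    qed (simp add: taboo_prob_Suc_notin pi_nonneg f_nonneg pos)
  qed
  have "summable (\<lambda>t. \<Sum>\<^sub>\<infinity>l. f l * taboo_prob B k (Suc t) l)"
    by (rule summableI_nonneg_bounded[OF _ partial_le]) (auto intro!: infsum_nonneg simp: f_nonneg taboo_prob_nonneg)
  then show "summable (\<lambda>t. \<Sum>\<^sub>\<infinity>l. f l * taboo_prob B k t l)"
    by (rule summable_Suc_iff[THEN iffD1])
qed

lemma taboo_prob_reaches_from_A:
  assumes "i \<in> B"
  obtains k m where "k \<in> A" "0 < taboo_prob B k (Suc m) i"
proof -
  obtain k0 where k0: "k0 \<in> A" using partition by blast
  have "\<forall>i\<in>B. 0 < mpow P n k0 i \<longrightarrow> (\<exists>k\<in>A. \<exists>m. 0 < taboo_prob B k (Suc m) i)" for n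
  proof (induction n)
    case 0
    then show ?case using k0 partition by auto
  next
    case (Suc n)
    show ?case
    proof (intro ballI impI)
      fix i assume i: "i \<in> B" and pos: "0 < mpow P (Suc n) k0 i"
      obtain j where j: "0 < mpow P n k0 j" "0 < P j i" using mpow_P_pos_step[OF pos] by blast
      show "\<exists>k\<in>A. \<exists>m. 0 < taboo_prob B k (Suc m) i"
      proof (cases "j \<in> A")
        case True
        then show ?thesis using j i by (intro bexI[OF _ True] exI[of _ 0]) (simp add: taboo_prob_1)
      next
        case False
        with Suc j notin_A_iff obtain k m where km: "k \<in> A" "0 < taboo_prob B k (Suc m) j" by blast
        with j have "0 < taboo_prob B k (Suc m) j * P j i" by simp
        also have "\<dots> \<le> taboo_prob B k (Suc (Suc m)) i"
          by (rule term_le_has_sum[OF taboo_prob_Suc[OF i]])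
             (auto intro: mult_nonneg_nonneg taboo_prob_nonneg P_nonneg)
        finally show ?thesis using km by blast
      qed
    qed
  qed
  moreover obtain n where "0 < mpow P n k0 i"
    using irreducible by (auto simp: irreducible_matrix_def)
  ultimately show ?thesis using assms that by blast
qed

lemma summable_taboo_series_via_A:
  assumes k: "k \<in> A" and pos: "0 < taboo_prob B k m i"
    and f_nonneg: "\<And>l. 0 \<le> f l" and f: "(\<lambda>l. \<pi> l * f l) summable_on UNIV"
  shows "(\<lambda>l. f l * taboo_prob B i n l) summable_on UNIV"
    and "summable (\<lambda>t. \<Sum>\<^sub>\<infinity>l. f l * taboo_prob B i t l)"
proof -
  define c where "c = taboo_prob B k m i"
  note from_k = summable_taboo_series_from_A[OF k f_nonneg f]
  have term_le: "f l * taboo_prob B i t l \<le> f l * taboo_prob B k (m + t) l / c" for t l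
  proof -
    have "c * taboo_prob B i t l \<le> taboo_prob B k (m + t) l"
      unfolding c_def by (rule taboo_prob_mult_le)
    then have "taboo_prob B i t l \<le> taboo_prob B k (m + t) l / c"
      using pos by (simp add: c_def field_simps)
    from mult_left_mono[OF this f_nonneg[of l]] show ?thesis by simp
  qed
  have dominant: "(\<lambda>l. f l * taboo_prob B k (m + t) l / c) summable_on UNIV" for t
    using summable_on_cmult_left[OF from_k(1)[of "m + t"], where c="1 / c"] by simp
  show inner: "(\<lambda>l. f l * taboo_prob B i t l) summable_on UNIV" for t
    by (rule summable_on_comparison_test[OF dominant term_le]) (simp add: f_nonneg taboo_prob_nonneg)
  have majorant: "summable (\<lambda>t. (\<Sum>\<^sub>\<infinity>l. f l * taboo_prob B k (t + m) l) / c)"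
    using from_k(2) by (subst (asm) summable_iff_shift[symmetric, of _ m]) (rule summable_divide)
  have "norm (\<Sum>\<^sub>\<infinity>l. f l * taboo_prob B i t l) \<le> (\<Sum>\<^sub>\<infinity>l. f l * taboo_prob B k (t + m) l) / c" for t
  proof -
    have "(\<Sum>\<^sub>\<infinity>l. f l * taboo_prob B i t l) \<le> (\<Sum>\<^sub>\<infinity>l. f l * taboo_prob B k (m + t) l / c)"
      by (rule infsum_mono[OF inner dominant term_le])
    also have "\<dots> = (\<Sum>\<^sub>\<infinity>l. f l * taboo_prob B k (t + m) l) / c"
      using infsum_cmult_left'[of "\<lambda>l. f l * taboo_prob B k (t + m) l" "1 / c" UNIV]
      by (simp add: add.commute)
    finally show ?thesis
      using infsum_nonneg[of UNIV "\<lambda>l. f l * taboo_prob B i t l"] f_nonneg taboo_prob_nonneg by simp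
  qed
  then show "summable (\<lambda>t. \<Sum>\<^sub>\<infinity>l. f l * taboo_prob B i t l)"
    by (intro summable_comparison_test'[OF majorant])
qed

lemma summable_taboo_series:
  assumes f_nonneg: "\<And>l. 0 \<le> f l" and f: "(\<lambda>l. \<pi> l * f l) summable_on UNIV"
  shows "(\<lambda>l. f l * taboo_prob B i n l) summable_on UNIV"
    and "summable (\<lambda>t. \<Sum>\<^sub>\<infinity>l. f l * taboo_prob B i t l)"
proof -
  obtain k m where "k \<in> A" "0 < taboo_prob B k m i"
  proof (cases "i \<in> A")
    case True
    with that[of i 0] show ?thesis by (simp add: taboo_prob_0)
  next
    case False
    with that taboo_prob_reaches_from_A notin_A_iff show ?thesis by blast
  qed
  from summable_taboo_series_via_A[OF this f_nonneg f]
  show "(\<lambda>l. f l * taboo_prob B i n l) summable_on UNIV"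
    and "summable (\<lambda>t. \<Sum>\<^sub>\<infinity>l. f l * taboo_prob B i t l)" .
qed

lemma AE_enters_A: "AE \<omega> in M i. \<exists>t\<ge>1. X t \<omega> \<in> A"
proof -
  let ?N = "{\<omega>\<in>space (M i). \<not> (\<exists>t\<ge>1. X t \<omega> \<in> A)}"
  let ?stay = "\<lambda>t. {\<omega>\<in>space (M i). \<forall>s\<in>{1..t}. X s \<omega> \<in> B}"
  have N[measurable]: "?N \<in> sets (M i)" by measurable
  have "(\<lambda>l. \<pi> l * 1) summable_on UNIV"
    using pi_has_sum by (auto simp: summable_on_def)
  then have "summable (\<lambda>t. \<Sum>\<^sub>\<infinity>l. taboo_prob B i t l)"
    using summable_taboo_series(2)[of "\<lambda>_. 1"] by simp
  moreover have "(\<Sum>\<^sub>\<infinity>l. taboo_prob B i t l) = measure (M i) (?stay t)" for t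
    using has_sum_taboo_prob by (rule infsumI)
  ultimately have "(\<lambda>t. measure (M i) (?stay t)) \<longlonglongrightarrow> 0"
    using summable_LIMSEQ_zero by fastforce
  moreover have "measure (M i) ?N \<le> measure (M i) (?stay t)" for t
    by (rule finite_measure.finite_measure_mono[OF finite_measure]) (use notin_A_iff in auto)
  ultimately have "measure (M i) ?N \<le> 0"
    by (intro LIMSEQ_le_const) auto
  then have "emeasure (M i) ?N = 0"
    using finite_measure by (simp add: finite_measure.emeasure_eq_measure measure_le_0_iff)
  then show ?thesis using AE_iff_measurable[OF N] by auto
qed

subsection \<open>Expected visits before entering \<open>A\<close>\<close>

text \<open>\<open>taboo_green i l\<close> is the expected number of times \<open>0 \<le> t < T(A)\<close> at which the chain
  started in \<open>i\<close> visits \<open>l\<close>; for \<open>i \<in> B\<close> it is the entry \<open>(N\<^sub>B)\<^sub>i\<^sub>l\<close>.\<close>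

definition taboo_green :: "'a \<Rightarrow> 'a \<Rightarrow> real" where
  "taboo_green i l = (\<Sum>n. taboo_prob B i n l)"

lemma summable_taboo_prob: "summable (\<lambda>n. taboo_prob B i n l)"
proof -
  define \<delta> where "\<delta> m = (if m = l then 1 else (0::real))" for m
  have "((\<lambda>m. \<pi> m * \<delta> m) has_sum \<pi> l * \<delta> l) UNIV"
    by (rule has_sum_single_nonzero) (auto simp: \<delta>_def)
  then have "summable (\<lambda>t. \<Sum>\<^sub>\<infinity>m. \<delta> m * taboo_prob B i t m)"
    by (intro summable_taboo_series(2)) (auto simp: \<delta>_def summable_on_def)
  moreover have "(\<Sum>\<^sub>\<infinity>m. \<delta> m * taboo_prob B i t m) = taboo_prob B i t l" for t
  proof -
    have "((\<lambda>m. \<delta> m * taboo_prob B i t m) has_sum \<delta> l * taboo_prob B i t l) UNIV"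
      by (rule has_sum_single_nonzero) (auto simp: \<delta>_def)
    then show ?thesis by (simp add: infsumI \<delta>_def)
  qed
  ultimately show ?thesis by simp
qed

lemma has_sum_taboo_green: "((\<lambda>n. taboo_prob B i n l) has_sum taboo_green i l) UNIV"
  unfolding taboo_green_def
  by (rule sums_nonneg_imp_has_sum[OF summable_sums[OF summable_taboo_prob]]) (simp add: taboo_prob_nonneg)

lemma taboo_green_nonneg: "0 \<le> taboo_green i l"
  by (rule has_sum_nonneg[OF has_sum_taboo_green]) (simp add: taboo_prob_nonneg)

lemma NB_eq_taboo_green: "j \<in> B \<Longrightarrow> NB P B j l = taboo_green j l"
  by (simp add: NB_def taboo_green_def mpow_restr_eq_taboo_prob)

lemma has_sum_weighted_taboo_green:
  assumes f: "(\<lambda>l. \<pi> l * \<bar>f l\<bar>) summable_on UNIV"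
  shows "((\<lambda>l. f l * taboo_green i l) has_sum (\<Sum>t. \<Sum>\<^sub>\<infinity>l. f l * taboo_prob B i t l)) UNIV"
proof -
  define F where "F t l = f l * taboo_prob B i t l" for t l
  have abs_F: "\<bar>F t l\<bar> = \<bar>f l\<bar> * taboo_prob B i t l" for t l
    by (simp add: F_def abs_mult taboo_prob_nonneg)
  have rows: "(\<lambda>l. \<bar>F t l\<bar>) summable_on UNIV" for t
    unfolding abs_F by (rule summable_taboo_series(1)[OF _ f]) simp
  have summable_abs: "summable (\<lambda>t. \<Sum>\<^sub>\<infinity>l. \<bar>F t l\<bar>)"
    unfolding abs_F by (rule summable_taboo_series(2)[OF _ f]) simp
  then have total: "(\<lambda>t. \<Sum>\<^sub>\<infinity>l. \<bar>F t l\<bar>) summable_on UNIV"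
    by (rule summable_nonneg_imp_summable_on) (simp add: infsum_nonneg)
  have green_eq: "(\<Sum>\<^sub>\<infinity>t. f l * taboo_prob B i t l) = f l * taboo_green i l" for l
    by (simp add: infsum_cmult_right' infsumI[OF has_sum_taboo_green])
  have bound: "\<bar>\<Sum>\<^sub>\<infinity>l. F t l\<bar> \<le> (\<Sum>\<^sub>\<infinity>l. \<bar>F t l\<bar>)" for t
    using norm_infsum_bound[of "F t" UNIV] rows[of t] by simp
  have norm_summable: "summable (\<lambda>t. norm (\<Sum>\<^sub>\<infinity>l. F t l))"
    by (rule summable_comparison_test'[OF summable_abs]) (simp add: bound)
  then have "((\<lambda>t. \<Sum>\<^sub>\<infinity>l. F t l) has_sum (\<Sum>t. \<Sum>\<^sub>\<infinity>l. F t l)) UNIV"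
    by (rule norm_summable_imp_has_sum) (rule summable_sums[OF summable_norm_cancel[OF norm_summable]])
  then have series_eq: "(\<Sum>\<^sub>\<infinity>t. \<Sum>\<^sub>\<infinity>l. f l * taboo_prob B i t l) = (\<Sum>t. \<Sum>\<^sub>\<infinity>l. f l * taboo_prob B i t l)"
    unfolding F_def by (rule infsumI)
  have "((\<lambda>l. \<Sum>\<^sub>\<infinity>t. f l * taboo_prob B i t l) has_sum (\<Sum>\<^sub>\<infinity>t. \<Sum>\<^sub>\<infinity>l. f l * taboo_prob B i t l)) UNIV"
    using has_sum_swap_abs[OF rows total] by (simp only: F_def)
  then show ?thesis
    unfolding green_eq series_eq .
qed

lemma summable_abs_weighted_taboo_green:
  assumes "(\<lambda>l. \<pi> l * \<bar>f l\<bar>) summable_on UNIV"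
  shows "(\<lambda>l. taboo_green i l * \<bar>f l\<bar>) summable_on UNIV"
  using has_sum_weighted_taboo_green[of "\<lambda>l. \<bar>f l\<bar>"] assms
  by (auto simp: summable_on_def mult.commute)

lemma taboo_green_first_step:
  "((\<lambda>j. P i j * taboo_green j l) has_sum taboo_green i l - (if l = i then 1 else 0)) B"
proof -
  have "summable (\<lambda>n. taboo_prob B i (Suc n) l)"
    by (subst summable_Suc_iff) (rule summable_taboo_prob)
  then have "((\<lambda>n. taboo_prob B i (Suc n) l) has_sum (\<Sum>n. taboo_prob B i (Suc n) l)) UNIV"
    by (rule sums_nonneg_imp_has_sum[OF summable_sums]) (simp add: taboo_prob_nonneg)
  then have "((\<lambda>j. \<Sum>\<^sub>\<infinity>n. P i j * taboo_prob B j n l) has_sum (\<Sum>n. taboo_prob B i (Suc n) l)) B"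
    by (intro has_sum_swap_nonneg(2)[OF _ taboo_prob_first_step])
       (auto intro: mult_nonneg_nonneg P_nonneg taboo_prob_nonneg)
  moreover have "(\<Sum>\<^sub>\<infinity>n. P i j * taboo_prob B j n l) = P i j * taboo_green j l" for j
    by (simp add: infsum_cmult_right' infsumI[OF has_sum_taboo_green])
  moreover have "(\<Sum>n. taboo_prob B i (Suc n) l) = taboo_green i l - (if l = i then 1 else 0)"
    unfolding taboo_green_def by (simp add: suminf_split_head[OF summable_taboo_prob] taboo_prob_0)
  ultimately show ?thesis by simp
qed

subsection \<open>The vectors \<open>y(A)\<close> and \<open>\<tau>(A)\<close>\<close>

lemma AE_sum_before_hit_time:
  "AE \<omega> in M i. (\<Sum>t<hit_time A X \<omega>. g (X t \<omega>)) = (\<Sum>t. taboo_value B g t \<omega>) \<and>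
     summable (\<lambda>t. \<bar>taboo_value B g t \<omega>\<bar>)"
  using AE_enters_A
proof eventually_elim
  case (elim \<omega>)
  then have value_eq: "taboo_value B g t \<omega> = (if t < hit_time A X \<omega> then g (X t \<omega>) else 0)" for t
    using stays_iff_less_hit_time[OF partition(1,2)] by (simp add: taboo_value_def)
  then have "(\<Sum>t. taboo_value B g t \<omega>) = (\<Sum>t<hit_time A X \<omega>. taboo_value B g t \<omega>)"
    by (intro suminf_finite) auto
  also have "\<dots> = (\<Sum>t<hit_time A X \<omega>. g (X t \<omega>))"
    by (simp add: value_eq)
  moreover have "summable (\<lambda>t. \<bar>taboo_value B g t \<omega>\<bar>)"
    by (rule summable_finite[of "{..<hit_time A X \<omega>}"]) (auto simp: value_eq)
  ultimately show ?case by simp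
qed

lemma y_vec_eq_taboo_series:
  assumes g: "(\<lambda>l. \<pi> l * \<bar>g l\<bar>) summable_on UNIV"
  shows "y_vec M X g A i = (\<Sum>t. \<Sum>\<^sub>\<infinity>l. g l * taboo_prob B i t l)"
proof -
  have summable_abs: "(\<lambda>l. \<bar>g l\<bar> * taboo_prob B i t l) summable_on UNIV" for t
    by (rule summable_taboo_series(1)[OF _ g]) simp
  note integral = integral_taboo_value[OF summable_abs]
  have "(\<integral>\<omega>. norm (taboo_value B g t \<omega>) \<partial>M i) = (\<Sum>\<^sub>\<infinity>l. \<bar>g l\<bar> * taboo_prob B i t l)" for t
    using integral_taboo_value(2)[of "\<lambda>l. \<bar>g l\<bar>"] summable_abs by (simp add: abs_taboo_value)
  moreover have "summable (\<lambda>t. \<Sum>\<^sub>\<infinity>l. \<bar>g l\<bar> * taboo_prob B i t l)"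
    by (rule summable_taboo_series(2)[OF _ g]) simp
  ultimately have summable_integrals: "summable (\<lambda>t. \<integral>\<omega>. norm (taboo_value B g t \<omega>) \<partial>M i)"
    by simp
  have AE_summable: "AE \<omega> in M i. summable (\<lambda>t. norm (taboo_value B g t \<omega>))"
    using AE_sum_before_hit_time[of g i] by (rule AE_mp) simp
  have [measurable]: "hit_time A X \<in> measurable (M i) (count_space UNIV)"
    unfolding hit_time_def by measurable
  have "(\<lambda>\<omega>. \<Sum>t<hit_time A X \<omega>. g (X t \<omega>)) \<in> borel_measurable (M i)"
    by (rule measurable_compose_countable[where f="\<lambda>n \<omega>. \<Sum>t<n. g (X t \<omega>)" and g="hit_time A X"])
       measurable
  then have "y_vec M X g A i = (\<integral>\<omega>. (\<Sum>t. taboo_value B g t \<omega>) \<partial>M i)"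
    unfolding y_vec_def
    using integrable_suminf[OF integral(1) AE_summable summable_integrals] AE_sum_before_hit_time[of g i]
    by (intro integral_cong_AE) auto
  also have "\<dots> = (\<Sum>t. integral\<^sup>L (M i) (taboo_value B g t))"
    by (rule integral_suminf[OF integral(1) AE_summable summable_integrals])
  finally show ?thesis by (simp add: integral(2))
qed

lemma has_sum_y_vec:
  assumes "(\<lambda>l. \<pi> l * \<bar>g l\<bar>) summable_on UNIV"
  shows "((\<lambda>l. taboo_green i l * g l) has_sum y_vec M X g A i) UNIV"
  using has_sum_weighted_taboo_green[OF assms, of i] y_vec_eq_taboo_series[OF assms, of i]
  by (simp add: mult.commute)

lemma has_sum_tau_vec: "(taboo_green i has_sum tau_vec M X A i) UNIV"
proof -
  have "(\<lambda>l. \<pi> l * \<bar>1\<bar>) summable_on UNIV"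
    using pi_has_sum by (auto simp: summable_on_def)
  from has_sum_y_vec[OF this, of i] show ?thesis
    by (simp add: y_vec_def tau_vec_def)
qed

lemma summable_pi_abs_diff_const:
  assumes g: "(\<lambda>l. \<pi> l * \<bar>g l\<bar>) summable_on UNIV"
  shows "(\<lambda>l. \<pi> l * \<bar>g l - c\<bar>) summable_on UNIV"
proof -
  have dominant: "(\<lambda>l. \<pi> l * \<bar>g l\<bar> + \<bar>c\<bar> * \<pi> l) summable_on UNIV"
    using pi_has_sum by (intro summable_on_add[OF g] summable_on_cmult_right) (auto simp: summable_on_def)
  have "\<pi> l * \<bar>g l - c\<bar> \<le> \<pi> l * \<bar>g l\<bar> + \<bar>c\<bar> * \<pi> l" for l
    using mult_left_mono[OF abs_triangle_ineq4[of "g l" c] pi_nonneg[of l]] by (simp add: algebra_simps)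
  then show ?thesis
    by (intro summable_on_comparison_test[OF dominant]) (simp_all add: pi_nonneg)
qed

lemma first_step_centered_y:
  fixes \<omega> :: real
  assumes g: "(\<lambda>l. \<pi> l * \<bar>g l\<bar>) summable_on UNIV"
  defines "u \<equiv> \<lambda>j. y_vec M X g A j - \<omega> * tau_vec M X A j"
  shows "((\<lambda>j. P i j * u j) has_sum u i - (g i - \<omega>)) B"
proof -
  define f where "f l = g l - \<omega>" for l
  have f: "(\<lambda>l. \<pi> l * \<bar>f l\<bar>) summable_on UNIV"
    unfolding f_def by (rule summable_pi_abs_diff_const[OF g])
  have u: "((\<lambda>l. taboo_green j l * f l) has_sum u j) UNIV" for j
  proof -
    have "((\<lambda>l. taboo_green j l * g l - \<omega> * taboo_green j l) has_sum u j) UNIV"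
      unfolding u_def by (intro has_sum_diff has_sum_cmult_right has_sum_y_vec[OF g] has_sum_tau_vec)
    then show ?thesis by (simp add: f_def algebra_simps)
  qed
  have delta: "((\<lambda>l. (if l = i then 1 else 0) * F l) has_sum F i) UNIV" for F :: "'a \<Rightarrow> real"
    using has_sum_single_nonzero[of i UNIV "\<lambda>l. (if l = i then 1 else 0) * F l"] by simp
  have R: "((\<lambda>l. (taboo_green i l - (if l = i then 1 else 0)) * f l) has_sum u i - f i) UNIV"
    using has_sum_diff[OF u delta[of f]] by (simp add: left_diff_distrib)
  have "((\<lambda>l. (taboo_green i l - (if l = i then 1 else 0)) * \<bar>f l\<bar>) has_sum
      (\<Sum>\<^sub>\<infinity>l. taboo_green i l * \<bar>f l\<bar>) - \<bar>f i\<bar>) UNIV"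
    using has_sum_diff[OF has_sum_infsum[OF summable_abs_weighted_taboo_green[OF f]] delta]
    by (simp add: left_diff_distrib)
  then have "((\<lambda>j. P i j * (\<Sum>\<^sub>\<infinity>l. taboo_green j l * f l)) has_sum
      (\<Sum>\<^sub>\<infinity>l. (taboo_green i l - (if l = i then 1 else 0)) * f l)) B"
    by (intro has_sum_kernel_comp taboo_green_first_step) (auto simp: P_nonneg taboo_green_nonneg summable_on_def)
  then show ?thesis
    using infsumI[OF u] infsumI[OF R] by (simp add: f_def)
qed

subsection \<open>The first-entrance kernel\<close>

text \<open>For \<open>k \<in> A\<close>, \<open>entrance_kernel i k\<close> is the probability that the chain started in \<open>i\<close> enters
  \<open>A\<close> (at a time \<open>\<ge> 1\<close>) for the first time in \<open>k\<close>. Its rows in \<open>A\<close> form \<open>P\<^sub>A + P\<^sub>A\<^sub>B N\<^sub>B P\<^sub>B\<^sub>A\<close>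
  and its rows in \<open>B\<close> form \<open>N\<^sub>B P\<^sub>B\<^sub>A\<close>.\<close>

definition entrance_kernel :: "'a \<Rightarrow> 'a \<Rightarrow> real" where
  "entrance_kernel i k = (if i \<in> A then P i k else 0) + (\<Sum>\<^sub>\<infinity>l\<in>B. taboo_green i l * P l k)"

lemma has_sum_entrance_kernel:
  "((\<lambda>l. taboo_green i l * P l k) has_sum entrance_kernel i k - (if i \<in> A then P i k else 0)) B"
proof -
  have "(\<lambda>l. \<pi> l * \<bar>P l k\<bar>) summable_on UNIV"
    using invariant_has_sum[of k] by (auto simp: P_nonneg summable_on_def)
  then have "(\<lambda>l. taboo_green i l * \<bar>P l k\<bar>) summable_on UNIV"
    by (rule summable_abs_weighted_taboo_green)
  then have "(\<lambda>l. taboo_green i l * P l k) summable_on UNIV"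
    by (simp add: P_nonneg)
  then have "(\<lambda>l. taboo_green i l * P l k) summable_on B"
    by (rule summable_on_subset_banach) simp
  then show ?thesis
    by (simp add: entrance_kernel_def)
qed

lemma entrance_kernel_nonneg: "0 \<le> entrance_kernel i k"
  unfolding entrance_kernel_def
  by (intro add_nonneg_nonneg infsum_nonneg mult_nonneg_nonneg) (simp_all add: P_nonneg taboo_green_nonneg)

lemma entrance_kernel_first_step:
  assumes "k \<in> A"
  shows "((\<lambda>j. P i j * entrance_kernel j k) has_sum entrance_kernel i k - P i k) B"
proof -
  have delta: "((\<lambda>l. (if l = i then 1 else 0) * P l k) has_sum (if i \<in> B then P i k else 0)) B"
  proof (cases "i \<in> B")
    case True
    then show ?thesis
      using has_sum_single_nonzero[OF True, of "\<lambda>l. (if l = i then 1 else 0) * P l k"] by simp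
  next
    case False
    then have "((\<lambda>l. (if l = i then 1 else 0) * P l k) has_sum 0) B"
      by (intro has_sum_0) auto
    with False show ?thesis by simp
  qed
  have "((\<lambda>l. (taboo_green i l - (if l = i then 1 else 0)) * P l k) has_sum
      entrance_kernel i k - (if i \<in> A then P i k else 0) - (if i \<in> B then P i k else 0)) B"
    using has_sum_diff[OF has_sum_entrance_kernel delta] by (simp add: left_diff_distrib)
  also have "entrance_kernel i k - (if i \<in> A then P i k else 0) - (if i \<in> B then P i k else 0) =
      entrance_kernel i k - P i k"
    using notin_A_iff[of i] by auto
  finally have outer: "((\<lambda>l. (taboo_green i l - (if l = i then 1 else 0)) * P l k) has_sum
      entrance_kernel i k - P i k) B" .
  have inner: "((\<lambda>j. P i j * taboo_green j l * P l k) has_sum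
      (taboo_green i l - (if l = i then 1 else 0)) * P l k) B" for l
    by (rule has_sum_cmult_left[OF taboo_green_first_step])
  have "((\<lambda>j. \<Sum>\<^sub>\<infinity>l\<in>B. P i j * taboo_green j l * P l k) has_sum entrance_kernel i k - P i k) B"
    by (rule has_sum_swap_nonneg(2)[OF _ inner outer]) (auto intro!: mult_nonneg_nonneg P_nonneg taboo_green_nonneg)
  moreover have "(\<Sum>\<^sub>\<infinity>l\<in>B. P i j * taboo_green j l * P l k) = P i j * entrance_kernel j k" if "j \<in> B" for j
    using that notin_A_iff[of j] by (simp add: entrance_kernel_def mult.assoc infsum_cmult_right')
  ultimately show ?thesis
    by (rule has_sum_cong[THEN iffD1, rotated]) simp
qed

lemma P_le_entrance_kernel: "k \<in> A \<Longrightarrow> P i k \<le> entrance_kernel i k"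
  using has_sum_nonneg[OF entrance_kernel_first_step] by (simp add: P_nonneg entrance_kernel_nonneg)

lemma NBPBA_eq_entrance_kernel: "j \<in> B \<Longrightarrow> NBPBA P A B j k = entrance_kernel j k"
  using notin_A_iff[of j] by (auto simp: NBPBA_def entrance_kernel_def NB_eq_taboo_green intro: infsum_cong)

lemma QA_eq_entrance_kernel:
  assumes "i \<in> A" "k \<in> A"
  shows "QA P A B i k = entrance_kernel i k"
proof -
  have "(\<Sum>\<^sub>\<infinity>j\<in>B. P i j * NBPBA P A B j k) = (\<Sum>\<^sub>\<infinity>j\<in>B. P i j * entrance_kernel j k)"
    by (rule infsum_cong) (simp add: NBPBA_eq_entrance_kernel)
  also have "\<dots> = entrance_kernel i k - P i k"
    using entrance_kernel_first_step[OF assms(2)] by (rule infsumI)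
  finally show ?thesis by (simp add: QA_def)
qed

lemma entrance_representation_of_block_equations:
  assumes hA_sum: "\<And>i. i \<in> A \<Longrightarrow> (\<lambda>k. QA P A B i k * h k) summable_on A"
    and hA: "\<And>i. i \<in> A \<Longrightarrow> h i = c i + (\<Sum>\<^sub>\<infinity>k\<in>A. QA P A B i k * h k)"
    and hB_sum: "\<And>i. i \<in> B \<Longrightarrow> (\<lambda>k. NBPBA P A B i k * h k) summable_on A"
    and hB: "\<And>i. i \<in> B \<Longrightarrow> h i = c i + (\<Sum>\<^sub>\<infinity>k\<in>A. NBPBA P A B i k * h k)"
  shows "\<And>j. (\<lambda>k. entrance_kernel j k * h k) summable_on A"
    and "\<And>j. h j = c j + (\<Sum>\<^sub>\<infinity>k\<in>A. entrance_kernel j k * h k)"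
proof -
  fix j
  have "(\<lambda>k. entrance_kernel j k * h k) summable_on A \<and> h j = c j + (\<Sum>\<^sub>\<infinity>k\<in>A. entrance_kernel j k * h k)"
  proof (cases "j \<in> A")
    case True
    then have row: "QA P A B j k * h k = entrance_kernel j k * h k" if "k \<in> A" for k
      using that by (simp add: QA_eq_entrance_kernel)
    have "(\<lambda>k. entrance_kernel j k * h k) summable_on A"
      using hA_sum[OF True] by (rule summable_on_cong[THEN iffD1, rotated]) (simp add: row)
    moreover have "(\<Sum>\<^sub>\<infinity>k\<in>A. QA P A B j k * h k) = (\<Sum>\<^sub>\<infinity>k\<in>A. entrance_kernel j k * h k)"
      by (rule infsum_cong) (simp add: row)
    ultimately show ?thesis
      using hA[OF True] by simp
  next
    case False
    then have j: "j \<in> B" using notin_A_iff by blast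
    then have "(\<lambda>k. NBPBA P A B j k * h k) = (\<lambda>k. entrance_kernel j k * h k)"
      by (simp add: NBPBA_eq_entrance_kernel)
    then show ?thesis
      using hB_sum[OF j] hB[OF j] by simp
  qed
  then show "(\<lambda>k. entrance_kernel j k * h k) summable_on A"
    and "h j = c j + (\<Sum>\<^sub>\<infinity>k\<in>A. entrance_kernel j k * h k)" by auto
qed

lemma summable_entrance_row:
  assumes h: "(\<lambda>k. entrance_kernel i k * h k) summable_on A"
  shows "(\<lambda>k. entrance_kernel i k * \<bar>h k\<bar>) summable_on A"
    and "(\<lambda>k. P i k * h k) summable_on A"
proof -
  show abs_E: "(\<lambda>k. entrance_kernel i k * \<bar>h k\<bar>) summable_on A"
    using h summable_on_iff_abs_summable_on_real[of "\<lambda>k. entrance_kernel i k * h k" A]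
    by (simp add: abs_mult entrance_kernel_nonneg)
  have "(\<lambda>k. P i k * \<bar>h k\<bar>) summable_on A"
    using abs_E by (rule summable_on_comparison_test) (auto intro!: mult_right_mono simp: P_nonneg P_le_entrance_kernel)
  then have "(\<lambda>k. norm (P i k * h k)) summable_on A"
    by (simp add: abs_mult P_nonneg)
  then show "(\<lambda>k. P i k * h k) summable_on A"
    by (rule abs_summable_summable)
qed

lemma first_step_entrance_average:
  assumes h: "(\<lambda>k. entrance_kernel i k * h k) summable_on A"
  shows "((\<lambda>j. P i j * (\<Sum>\<^sub>\<infinity>k\<in>A. entrance_kernel j k * h k)) has_sum
      (\<Sum>\<^sub>\<infinity>k\<in>A. (entrance_kernel i k - P i k) * h k)) B"
proof (rule has_sum_kernel_comp)
  from summable_entrance_row(1)[OF h] show "(\<lambda>k. (entrance_kernel i k - P i k) * \<bar>h k\<bar>) summable_on A"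
    by (rule summable_on_comparison_test) (auto intro!: mult_right_mono simp: P_nonneg P_le_entrance_kernel)
qed (simp_all add: P_nonneg entrance_kernel_nonneg entrance_kernel_first_step)

lemma poisson_equation_from_entrance_representation:
  fixes \<omega> :: real
  assumes g: "(\<lambda>l. \<pi> l * \<bar>g l\<bar>) summable_on UNIV"
    and h_summable: "\<And>j. (\<lambda>k. entrance_kernel j k * h k) summable_on A"
    and h: "\<And>j. h j = y_vec M X g A j - \<omega> * tau_vec M X A j + (\<Sum>\<^sub>\<infinity>k\<in>A. entrance_kernel j k * h k)"
  shows "((\<lambda>j. P i j * h j) has_sum h i - (g i - \<omega>)) UNIV"
proof -
  define u where "u j = y_vec M X g A j - \<omega> * tau_vec M X A j" for j
  define v where "v j = (\<Sum>\<^sub>\<infinity>k\<in>A. entrance_kernel j k * h k)" for j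
  note summable_PA = summable_entrance_row(2)[OF h_summable]
  have "((\<lambda>k. (entrance_kernel i k - P i k) * h k) has_sum v i - (\<Sum>\<^sub>\<infinity>k\<in>A. P i k * h k)) A"
    using has_sum_diff[OF has_sum_infsum[OF h_summable[of i]] has_sum_infsum[OF summable_PA]]
    by (simp add: v_def left_diff_distrib)
  then have split_v: "v i = (\<Sum>\<^sub>\<infinity>k\<in>A. P i k * h k) + (\<Sum>\<^sub>\<infinity>k\<in>A. (entrance_kernel i k - P i k) * h k)"
    by (simp add: infsumI)
  have "((\<lambda>j. P i j * u j + P i j * v j) has_sum
      (u i - (g i - \<omega>)) + (\<Sum>\<^sub>\<infinity>k\<in>A. (entrance_kernel i k - P i k) * h k)) B"
    unfolding u_def v_def
    by (intro has_sum_add first_step_centered_y[OF g] first_step_entrance_average[OF h_summable[of i]])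
  moreover have "P i j * u j + P i j * v j = P i j * h j" for j
    using h[of j] by (simp add: u_def v_def distrib_left)
  ultimately have on_B: "((\<lambda>j. P i j * h j) has_sum
      (u i - (g i - \<omega>)) + (\<Sum>\<^sub>\<infinity>k\<in>A. (entrance_kernel i k - P i k) * h k)) B"
    by simp
  have on_A: "((\<lambda>j. P i j * h j) has_sum (\<Sum>\<^sub>\<infinity>k\<in>A. P i k * h k)) A"
    using summable_PA by (rule has_sum_infsum)
  have "h i = u i + v i"
    using h[of i] by (simp add: u_def v_def)
  with has_sum_Un_disjoint[OF on_A on_B partition(1)] partition(2) split_v
  show ?thesis
    by (simp add: algebra_simps)
qed

end

theorem theorem2p5:
  fixes P :: "'a::countable \<Rightarrow> 'a \<Rightarrow> real"
    and \<pi> g h :: "'a \<Rightarrow> real"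
    and M :: "'a \<Rightarrow> 'w measure"
    and X :: "nat \<Rightarrow> 'w \<Rightarrow> 'a"
    and A B :: "'a set"
  assumes stoch: "stochastic_matrix P"
    and chain: "\<And>i. markov_chain_from P (M i) X i"
    and irred: "irreducible_matrix P"
    and posrec: "positive_recurrent M X"
    and inv: "invariant_distribution P \<pi>"
    and gint: "(\<lambda>i. \<pi> i * \<bar>g i\<bar>) summable_on UNIV"
    and AB: "A \<inter> B = {}" "A \<union> B = UNIV" "A \<noteq> {}" "B \<noteq> {}"
    and hA_sum: "\<And>i. i \<in> A \<Longrightarrow> (\<lambda>k. QA P A B i k * h k) summable_on A"
    and hA: "\<And>i. i \<in> A \<Longrightarrow> h i = y_vec M X g A i - (\<Sum>\<^sub>\<infinity>j. \<pi> j * g j) * tau_vec M X A i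
                                   + (\<Sum>\<^sub>\<infinity>k\<in>A. QA P A B i k * h k)"
    and hB_sum: "\<And>i. i \<in> B \<Longrightarrow> (\<lambda>k. NBPBA P A B i k * h k) summable_on A"
    and hB: "\<And>i. i \<in> B \<Longrightarrow> h i = y_vec M X g A i - (\<Sum>\<^sub>\<infinity>j. \<pi> j * g j) * tau_vec M X A i
                                   + (\<Sum>\<^sub>\<infinity>k\<in>A. NBPBA P A B i k * h k)"
  shows "\<forall>i. (\<lambda>j. P i j * h j) summable_on UNIV \<and>
             h i - (\<Sum>\<^sub>\<infinity>j. P i j * h j) = g i - (\<Sum>\<^sub>\<infinity>j. \<pi> j * g j)"
proof -
  interpret markov_chain_split P M X A B \<pi>
    using stoch chain AB inv irred by unfold_locales auto
  let ?\<omega> = "\<Sum>\<^sub>\<infinity>j. \<pi> j * g j"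
  note entrance = entrance_representation_of_block_equations
    [where c="\<lambda>i. y_vec M X g A i - ?\<omega> * tau_vec M X A i", OF hA_sum hA hB_sum hB]
  have solution: "((\<lambda>j. P i j * h j) has_sum h i - (g i - ?\<omega>)) UNIV" for i
    by (rule poisson_equation_from_entrance_representation[OF gint entrance])
  show ?thesis
  proof (intro allI conjI)
    fix i
    show "(\<lambda>j. P i j * h j) summable_on UNIV"
      using solution[of i] by (auto simp: summable_on_def)
    show "h i - (\<Sum>\<^sub>\<infinity>j. P i j * h j) = g i - ?\<omega>"
      using infsumI[OF solution[of i]] by simp
  qed
qed

end
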